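(* Let $V$ be a poset, $m$ a maximal node of $V$ of positive height, and $U$ a splitting of $V$ at $m$ with splitting map $\varphi$. Suppose $U\cong\operatorname{Spec}R$ (as posets) for some commutative Noetherian ring $R$ such that $R/M\cong R/N$ for all maximal ideals $M,N$ of $R$. Then there exists a Noetherian subring $L\subseteq R$ with $\operatorname{Spec}L\cong V$.
   Context: Splitting: for a poset $V$ with a maximal node $m$ of positive height (height = supremum of lengths of chains below the node), a poset $U$ is a splitting of $V$ at $m$ with splitting map $\varphi$ if $\varphi:U\to V$ is surjective order-preserving, there is a finite nonempty set $\mathcal M\subseteq\max U$ of positive-height nodes with $\varphi^{-1}(m)=\mathcal M$, $|\varphi^{-1}(v)|=1$ for $v\ne m$, and whenever $\varphi(x')=x\le y$ there is $y'\ge x'$ with $\varphi(y')=y$. Spectra are ordered by inclusion; $\cong$ means order isomorphism. *)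

theory Defs
  imports "HOL-Algebra.Ring_Divisibility" "HOL-Algebra.QuotRing" "HOL-Algebra.Subrings"
    "HOL-Library.Extended_Nat"
begin

definition is_poset :: "'a set \<Rightarrow> ('a \<Rightarrow> 'a \<Rightarrow> bool) \<Rightarrow> bool" where
  "is_poset A ord \<longleftrightarrow>
     (\<forall>x\<in>A. ord x x) \<and>
     (\<forall>x\<in>A. \<forall>y\<in>A. ord x y \<and> ord y x \<longrightarrow> x = y) \<and>
     (\<forall>x\<in>A. \<forall>y\<in>A. \<forall>z\<in>A. ord x y \<and> ord y z \<longrightarrow> ord x z)"

definition is_maximal_node :: "'a set \<Rightarrow> ('a \<Rightarrow> 'a \<Rightarrow> bool) \<Rightarrow> 'a \<Rightarrow> bool" where
  "is_maximal_node A ord x \<longleftrightarrow> x \<in> A \<and> (\<forall>y\<in>A. ord x y \<longrightarrow> y = x)"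

definition chain_below :: "'a set \<Rightarrow> ('a \<Rightarrow> 'a \<Rightarrow> bool) \<Rightarrow> 'a \<Rightarrow> nat \<Rightarrow> bool" where
  "chain_below A ord x n \<longleftrightarrow>
     (\<exists>c :: nat \<Rightarrow> 'a. (\<forall>i\<le>n. c i \<in> A) \<and> (\<forall>i<n. ord (c i) (c (Suc i)) \<and> c i \<noteq> c (Suc i))
        \<and> c n = x)"

definition node_height :: "'a set \<Rightarrow> ('a \<Rightarrow> 'a \<Rightarrow> bool) \<Rightarrow> 'a \<Rightarrow> enat" where
  "node_height A ord x = Sup {enat n | n. chain_below A ord x n}"

definition poset_iso :: "'a set \<Rightarrow> ('a \<Rightarrow> 'a \<Rightarrow> bool) \<Rightarrow> 'b set \<Rightarrow> ('b \<Rightarrow> 'b \<Rightarrow> bool) \<Rightarrow> bool" where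
  "poset_iso A leA B leB \<longleftrightarrow>
     (\<exists>f. bij_betw f A B \<and> (\<forall>x\<in>A. \<forall>y\<in>A. leA x y \<longleftrightarrow> leB (f x) (f y)))"

definition is_splitting ::
  "'v set \<Rightarrow> ('v \<Rightarrow> 'v \<Rightarrow> bool) \<Rightarrow> 'v \<Rightarrow> 'u set \<Rightarrow> ('u \<Rightarrow> 'u \<Rightarrow> bool) \<Rightarrow> ('u \<Rightarrow> 'v) \<Rightarrow> bool" where
  "is_splitting V leV m U leU \<phi> \<longleftrightarrow>
     is_poset U leU \<and>
     \<phi> ` U = V \<and>
     (\<forall>x\<in>U. \<forall>y\<in>U. leU x y \<longrightarrow> leV (\<phi> x) (\<phi> y)) \<and>
     (\<exists>M. finite M \<and> M \<noteq> {} \<and>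
        (\<forall>x\<in>M. is_maximal_node U leU x \<and> node_height U leU x > 0) \<and>
        {x\<in>U. \<phi> x = m} = M) \<and>
     (\<forall>v\<in>V. v \<noteq> m \<longrightarrow> card {x\<in>U. \<phi> x = v} = 1) \<and>
     (\<forall>x'\<in>U. \<forall>y\<in>V. leV (\<phi> x') y \<longrightarrow> (\<exists>y'\<in>U. leU x' y' \<and> \<phi> y' = y))"

(* prime spectrum, ordered by inclusion *)
definition Spec :: "('a, 'b) ring_scheme \<Rightarrow> 'a set set" where
  "Spec R = {P. primeideal P R}"

end

theory Submission
  imports Defs
begin

(*
  Transport the splitting along U = Spec R: the fibre over m becomes a finite set Ms of maximal
  ideals of R whose residue fields are all isomorphic to R/M0. Fix isomorphisms R/N = R/M0 and let L
  be the subring of those r whose residues modulo the various N in Ms agree. Then L/IM, with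
  IM = Inter Ms, is a field; the primes of L are IM and the contractions of the other primes of R;
  and contraction preserves and reflects inclusion, except that all of Ms collapse to IM. So
  Spec L is Spec R with Ms glued to one point, which is V.

  L is Noetherian: along a chain of ideals J of L, the ideals of R generated by J \<inter> IM become
  stationary, from then on J \<inter> IM ranges between IM G and a finitely generated L-module on which IM
  acts through IM G, a module of finite length over the field L/IM; and J + IM can only be IM or L.
  By the modular law the chain stabilises.
*)

section \<open>Ideals and comaximality\<close>

context ring
begin

lemma ideal_carrier: "ideal I R \<Longrightarrow> I \<subseteq> carrier R"
  by (rule additive_subgroup.a_subset[OF ideal.axioms(1)])

lemma ideal_zero: "ideal I R \<Longrightarrow> \<zero> \<in> I"
  by (rule additive_subgroup.zero_closed[OF ideal.axioms(1)])

lemma ideal_add: "ideal I R \<Longrightarrow> x \<in> I \<Longrightarrow> y \<in> I \<Longrightarrow> x \<oplus> y \<in> I"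
  by (rule additive_subgroup.a_closed[OF ideal.axioms(1)])

lemma ideal_neg: "ideal I R \<Longrightarrow> x \<in> I \<Longrightarrow> \<ominus> x \<in> I"
  by (rule additive_subgroup.a_inv_closed[OF ideal.axioms(1)])

lemma ideal_diff: "ideal I R \<Longrightarrow> x \<in> I \<Longrightarrow> y \<in> I \<Longrightarrow> x \<ominus> y \<in> I"
  unfolding a_minus_def by (intro ideal_add ideal_neg)

lemma proper_ideal_one_notin: "ideal I R \<Longrightarrow> I \<noteq> carrier R \<Longrightarrow> \<one> \<notin> I"
  using ideal.one_imp_carrier by blast

lemma genideal_finite_subset:
  assumes S: "S \<subseteq> carrier R" and x: "x \<in> Idl S"
  shows "\<exists>G. finite G \<and> G \<subseteq> S \<and> x \<in> Idl G"
proof -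
  define D where "D = {x. \<exists>G. finite G \<and> G \<subseteq> S \<and> x \<in> Idl G}"
  have Gid: "ideal (Idl G) R" if "G \<subseteq> S" for G using genideal_ideal that S by auto
  have mono: "Idl G \<subseteq> Idl G'" if "G \<subseteq> G'" "G' \<subseteq> S" for G G'
    using subset_Idl_subset that S by auto
  have "ideal D R"
  proof (rule idealI[OF ring_axioms])
    show "subgroup D (add_monoid R)"
    proof (rule add.subgroupI)
      show "D \<subseteq> carrier R" unfolding D_def using ideal_carrier[OF Gid] by blast
      show "D \<noteq> {}" unfolding D_def using ideal_zero[OF Gid[of "{}"]] by blast
    next
      fix a assume "a \<in> D"
      then show "\<ominus> a \<in> D" unfolding D_def using ideal_neg[OF Gid] by blast
    next
      fix a b assume "a \<in> D" "b \<in> D"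
      then obtain G1 G2 where G: "finite G1" "G1 \<subseteq> S" "a \<in> Idl G1" "finite G2" "G2 \<subseteq> S" "b \<in> Idl G2"
        unfolding D_def by auto
      then have "a \<in> Idl (G1 \<union> G2)" "b \<in> Idl (G1 \<union> G2)" using mono[of _ "G1 \<union> G2"] by auto
      then have "a \<oplus> b \<in> Idl (G1 \<union> G2)" using ideal_add[OF Gid] G by auto
      then show "a \<oplus> b \<in> D" unfolding D_def using G by blast
    qed
  next
    fix a r assume "a \<in> D" and r: "r \<in> carrier R"
    then obtain G where G: "finite G" "G \<subseteq> S" "a \<in> Idl G" unfolding D_def by blast
    then have "r \<otimes> a \<in> Idl G" "a \<otimes> r \<in> Idl G"
      using ideal.I_l_closed[OF Gid[OF G(2)] G(3) r] ideal.I_r_closed[OF Gid[OF G(2)] G(3) r] by auto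
    then show "r \<otimes> a \<in> D" "a \<otimes> r \<in> D" unfolding D_def using G(1,2) by blast+
  qed
  moreover have "S \<subseteq> D" unfolding D_def using genideal_self' S by blast
  ultimately have "Idl S \<subseteq> D" using genideal_minimal by blast
  then show ?thesis using x unfolding D_def by auto
qed

end

context cring
begin

lemma maximalideal_comaximal:
  assumes P: "ideal P R" and N: "maximalideal N R" and not_sub: "\<not> P \<subseteq> N"
  shows "\<exists>p\<in>P. \<exists>c\<in>N. \<one> = p \<oplus> c"
proof -
  interpret N: maximalideal N R by (rule N)
  have sum_ideal: "ideal (P <+> N) R" using add_ideals[OF P N.is_ideal] .
  have sub: "P \<subseteq> P <+> N" "N \<subseteq> P <+> N"
    using union_genideal[OF P N.is_ideal] genideal_self ideal_carrier[OF P] N.a_subset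
    by (metis Un_subset_iff le_supI)+
  have "P <+> N = N \<or> P <+> N = carrier R"
    by (rule N.I_maximal[OF sum_ideal sub(2) ideal_carrier[OF sum_ideal]])
  then have "\<one> \<in> P <+> N" using sub(1) not_sub by auto
  then show ?thesis unfolding set_add_def' by auto
qed

text \<open>Multiplying the relations \<open>\<one> = p\<^sub>i \<oplus> c\<^sub>i\<close> gives one relation with \<open>c\<close> in all the \<open>N\<close>.\<close>
lemma comaximal_with_Inter:
  assumes P: "ideal P R" and S: "finite S" "\<And>N. N \<in> S \<Longrightarrow> ideal N R"
    and comax: "\<forall>N\<in>S. \<exists>p\<in>P. \<exists>c\<in>N. \<one> = p \<oplus> c"
  shows "\<exists>p\<in>P. \<exists>c\<in>carrier R. (\<forall>N\<in>S. c \<in> N) \<and> \<one> = p \<oplus> c"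
  using S comax
proof (induction S rule: finite_induct)
  case empty
  show ?case using ideal_zero[OF P] by (intro bexI[of _ "\<zero>"] bexI[of _ "\<one>"]) auto
next
  case (insert N S)
  then obtain p c where pc: "p \<in> P" "c \<in> carrier R" "\<forall>N\<in>S. c \<in> N" "\<one> = p \<oplus> c" by auto
  obtain p' c' where pc': "p' \<in> P" "c' \<in> N" "\<one> = p' \<oplus> c'" using insert by auto
  have N: "ideal N R" using insert by auto
  have carr: "p \<in> carrier R" "p' \<in> carrier R" "c' \<in> carrier R"
    using pc pc' ideal_carrier[OF P] ideal_carrier[OF N] by auto
  have "\<one> = \<one> \<otimes> \<one>" by simp
  also have "\<dots> = (p \<oplus> c) \<otimes> (p' \<oplus> c')" by (simp only: pc(4)[symmetric] pc'(3)[symmetric])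
  also have "\<dots> = (p \<otimes> (p' \<oplus> c') \<oplus> c \<otimes> p') \<oplus> c \<otimes> c'" using carr pc(2) by algebra
  finally have eq: "\<one> = (p \<otimes> (p' \<oplus> c') \<oplus> c \<otimes> p') \<oplus> c \<otimes> c'" .
  have "p \<otimes> (p' \<oplus> c') \<oplus> c \<otimes> p' \<in> P"
    using ideal_add[OF P ideal.I_r_closed[OF P pc(1)] ideal.I_l_closed[OF P pc'(1) pc(2)]] carr by simp
  moreover have "c \<otimes> c' \<in> N'" if "N' \<in> S" for N'
  proof -
    have "ideal N' R" using insert.prems(1) that by blast
    then show ?thesis using ideal.I_r_closed[OF _ _ carr(3)] pc(3) that by blast
  qed
  then have "\<forall>N'\<in>insert N S. c \<otimes> c' \<in> N'" using ideal.I_l_closed[OF N pc'(2) pc(2)] by blast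
  moreover have "c \<otimes> c' \<in> carrier R" using pc(2) carr(3) by simp
  ultimately show ?case using eq by metis
qed

lemma maximalideal_not_subset:
  assumes "maximalideal N R" "maximalideal N' R" "N \<noteq> N'"
  shows "\<not> N \<subseteq> N'"
proof
  assume "N \<subseteq> N'"
  then have "N' = N \<or> N' = carrier R"
    using maximalideal.I_maximal[OF assms(1) maximalideal.axioms(1)[OF assms(2)]]
      ideal_carrier[OF maximalideal.axioms(1)[OF assms(2)]] by blast
  then show False using assms(3) maximalideal.I_notcarr[OF assms(2)] by auto
qed

lemma chinese_remainder_maximalideals:
  assumes S: "finite S" "\<And>N. N \<in> S \<Longrightarrow> maximalideal N R"
    and y: "\<And>N. N \<in> S \<Longrightarrow> y N \<in> carrier R"
  shows "\<exists>a\<in>carrier R. \<forall>N\<in>S. a \<ominus> y N \<in> N"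
  using S y
proof (induction S rule: finite_induct)
  case empty
  then show ?case by auto
next
  case (insert N S)
  then obtain a where a: "a \<in> carrier R" "\<forall>N\<in>S. a \<ominus> y N \<in> N" by auto
  have N: "maximalideal N R" and NI: "ideal N R" using insert maximalideal.axioms(1) by auto
  have "\<exists>p\<in>N. \<exists>c\<in>N'. \<one> = p \<oplus> c" if N': "N' \<in> S" for N'
  proof (rule maximalideal_comaximal[OF NI])
    show "maximalideal N' R" using insert.prems(1) N' by blast
    then show "\<not> N \<subseteq> N'" using maximalideal_not_subset[OF N] insert.hyps(2) N' by blast
  qed
  moreover have "\<And>N'. N' \<in> S \<Longrightarrow> ideal N' R" using insert.prems(1) maximalideal.axioms(1) by blast
  ultimately obtain p e where pe: "p \<in> N" "e \<in> carrier R" "\<forall>N'\<in>S. e \<in> N'" "\<one> = p \<oplus> e"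
    using comaximal_with_Inter[OF NI insert(1)] by blast
  have yN: "y N \<in> carrier R" and pc: "p \<in> carrier R" using insert.prems pe ideal_carrier[OF NI] by auto
  define a' where "a' = a \<oplus> e \<otimes> (y N \<ominus> a)"
  have "a' \<ominus> y N' \<in> N'" if N': "N' \<in> S" for N'
  proof -
    have N'I: "ideal N' R" using N' insert.prems maximalideal.axioms(1) by blast
    have "y N' \<in> carrier R" using insert.prems(2) N' by blast
    then have "a' \<ominus> y N' = (a \<ominus> y N') \<oplus> e \<otimes> (y N \<ominus> a)"
      unfolding a'_def using a pe(2) yN by algebra
    then show ?thesis
      using ideal_add[OF N'I] a(2) ideal.I_r_closed[OF N'I] pe(2,3) a(1) yN N' by simp
  qed
  moreover have "\<one> \<ominus> e = (p \<oplus> e) \<ominus> e" by (simp only: pe(4)[symmetric])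
  then have "p = \<one> \<ominus> e" using pc pe(2) by algebra
  then have "a' \<ominus> y N = p \<otimes> (a \<ominus> y N)"
    unfolding a'_def using a pe(2) yN by algebra
  then have "a' \<ominus> y N \<in> N" using ideal.I_r_closed[OF NI pe(1) minus_closed[OF a(1) yN]] by simp
  moreover have "a' \<in> carrier R" unfolding a'_def using a pe yN by simp
  ultimately show ?case by auto
qed

lemma product_avoiding_prime:
  assumes Q: "primeideal Q R" and S: "finite S" "\<And>N. N \<in> S \<Longrightarrow> ideal N R"
    and not_sub: "\<forall>N\<in>S. \<not> N \<subseteq> Q"
  shows "\<exists>c\<in>carrier R. c \<notin> Q \<and> (\<forall>N\<in>S. c \<in> N)"
  using S not_sub
proof (induction S rule: finite_induct)
  case empty
  have "\<one> \<notin> Q" using proper_ideal_one_notin primeideal.axioms(1)[OF Q] primeideal.I_notcarr[OF Q] by metis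
  then show ?case by auto
next
  case (insert N S)
  then obtain c where c: "c \<in> carrier R" "c \<notin> Q" "\<forall>N\<in>S. c \<in> N" by auto
  obtain n where n: "n \<in> N" "n \<notin> Q" using insert.prems by auto
  have NI: "ideal N R" using insert.prems by auto
  have nc: "n \<in> carrier R" using n ideal_carrier[OF NI] by auto
  have "c \<otimes> n \<notin> Q" using primeideal.I_prime[OF Q c(1) nc] c n by auto
  moreover have "c \<otimes> n \<in> N'" if "N' \<in> S" for N'
  proof -
    have "ideal N' R" using insert.prems(1) that by blast
    then show ?thesis using ideal.I_r_closed[OF _ _ nc] c(3) that by blast
  qed
  then have "\<forall>N'\<in>insert N S. c \<otimes> n \<in> N'" using ideal.I_l_closed[OF NI n(1) c(1)] by blast
  ultimately show ?case using c nc by blast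
qed

end

context noetherian_ring
begin

lemma genideal_finite_generators:
  assumes S: "S \<subseteq> carrier R"
  shows "\<exists>G. finite G \<and> G \<subseteq> S \<and> Idl S = Idl G"
proof -
  obtain F where F: "F \<subseteq> carrier R" "finite F" "Idl S = Idl F"
    using finetely_gen[OF genideal_ideal[OF S]] by blast
  have "\<forall>f\<in>F. \<exists>G. finite G \<and> G \<subseteq> S \<and> f \<in> Idl G"
    using genideal_finite_subset[OF S] genideal_self[OF F(1)] F(3) by blast
  then obtain Gf where Gf: "\<And>f. f \<in> F \<Longrightarrow> finite (Gf f) \<and> Gf f \<subseteq> S \<and> f \<in> Idl (Gf f)"
    by metis
  define G where "G = \<Union>(Gf ` F)"
  have G: "finite G" "G \<subseteq> S" using F(2) Gf unfolding G_def by auto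
  have "F \<subseteq> Idl G"
  proof
    fix f assume f: "f \<in> F"
    have "Idl (Gf f) \<subseteq> Idl G" using subset_Idl_subset[of G "Gf f"] G(2) S f unfolding G_def by blast
    then show "f \<in> Idl G" using Gf[OF f] by blast
  qed
  then have "Idl S \<subseteq> Idl G"
    using F(3) genideal_minimal[OF genideal_ideal] G(2) S by (metis subset_trans)
  moreover have "Idl G \<subseteq> Idl S" using subset_Idl_subset[OF S G(2)] .
  ultimately show ?thesis using G by blast
qed

lemma exists_maximalideal_superset:
  assumes I: "ideal I R" and proper: "I \<noteq> carrier R"
  shows "\<exists>K. maximalideal K R \<and> I \<subseteq> K"
proof -
  define S where "S = {J. ideal J R \<and> I \<subseteq> J \<and> J \<noteq> carrier R}"
  have "\<exists>K\<in>S. \<forall>X\<in>S. K \<subseteq> X \<longrightarrow> X = K"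
  proof (rule subset_Zorn)
    fix C assume C: "subset.chain S C"
    show "\<exists>U\<in>S. \<forall>X\<in>C. X \<subseteq> U"
    proof (cases "C = {}")
      case True then show ?thesis using I proper unfolding S_def by auto
    next
      case False
      have "subset.chain {J. ideal J R} C" using C unfolding pred_on.chain_def S_def by blast
      then have "\<Union>C \<in> C" by (rule ideal_chain_is_trivial[OF False])
      then have "\<Union>C \<in> S" using C unfolding pred_on.chain_def by blast
      then show ?thesis by blast
    qed
  qed
  then obtain K where K: "K \<in> S" "\<And>X. X \<in> S \<Longrightarrow> K \<subseteq> X \<Longrightarrow> X = K" by blast
  have "maximalideal K R"
  proof (rule maximalidealI)
    show "ideal K R" "carrier R \<noteq> K" using K(1) unfolding S_def by auto
    fix J assume "ideal J R" "K \<subseteq> J" "J \<subseteq> carrier R"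
    then show "J = K \<or> J = carrier R" using K unfolding S_def by blast
  qed
  then show ?thesis using K(1) unfolding S_def by auto
qed

end

section \<open>Submodules over a subring\<close>

lemma subset_chain_iff: "subset.chain A C \<longleftrightarrow> C \<subseteq> A \<and> chain\<^sub>\<subseteq> C"
  unfolding subset.chain_def chain_subset_def by blast

lemma chain_subset_image:
  assumes "chain\<^sub>\<subseteq> C" and "\<And>X Y. X \<subseteq> Y \<Longrightarrow> f X \<subseteq> f Y"
  shows "chain\<^sub>\<subseteq> (f ` C)"
  unfolding chain_subset_def
proof (intro ballI)
  fix A B assume "A \<in> f ` C" "B \<in> f ` C"
  then obtain X Y where "X \<in> C" "Y \<in> C" "A = f X" "B = f Y" by blast
  moreover have "X \<subseteq> Y \<or> Y \<subseteq> X" using assms(1) \<open>X \<in> C\<close> \<open>Y \<in> C\<close> unfolding chain_subset_def by blast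
  ultimately show "A \<subseteq> B \<or> B \<subseteq> A" using assms(2) by blast
qed

lemma chain_subset_Union_two:
  assumes "chain\<^sub>\<subseteq> D" and "D \<noteq> {}" and "D \<subseteq> {P, Q}"
  shows "\<Union>D \<in> D"
proof -
  consider "D = {P}" | "D = {Q}" | "D = {P, Q}" using assms(2,3) by blast
  then show ?thesis
  proof cases
    case 3
    then have "P \<subseteq> Q \<or> Q \<subseteq> P" using assms(1) unfolding chain_subset_def by blast
    then have "\<Union>D = Q \<or> \<Union>D = P" using 3 by blast
    then show ?thesis using 3 by blast
  qed simp_all
qed

lemma chain_subset_Union_tail:
  assumes "chain\<^sub>\<subseteq> C" and "J0 \<in> C"
  shows "\<Union>{J \<in> C. J0 \<subseteq> J} = \<Union>C"
proof
  show "\<Union>C \<subseteq> \<Union>{J \<in> C. J0 \<subseteq> J}"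
  proof
    fix x assume "x \<in> \<Union>C"
    then obtain J where J: "J \<in> C" "x \<in> J" by blast
    then have "J \<subseteq> J0 \<or> J0 \<subseteq> J" using assms unfolding chain_subset_def by blast
    then show "x \<in> \<Union>{J \<in> C. J0 \<subseteq> J}" using J assms(2) by blast
  qed
qed blast

context cring
begin

definition submod :: "'a set \<Rightarrow> 'a set \<Rightarrow> bool" where
  "submod A Y \<longleftrightarrow> Y \<subseteq> carrier R \<and> \<zero> \<in> Y \<and> (\<forall>x\<in>Y. \<forall>y\<in>Y. x \<oplus> y \<in> Y) \<and> (\<forall>a\<in>A. \<forall>y\<in>Y. a \<otimes> y \<in> Y)"

lemma submodD:
  assumes "submod A Y"
  shows "Y \<subseteq> carrier R" "\<zero> \<in> Y" "\<And>x y. x \<in> Y \<Longrightarrow> y \<in> Y \<Longrightarrow> x \<oplus> y \<in> Y"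
    "\<And>a y. a \<in> A \<Longrightarrow> y \<in> Y \<Longrightarrow> a \<otimes> y \<in> Y"
  using assms unfolding submod_def by auto

lemma submod_neg:
  assumes A: "subring A R" and Y: "submod A Y" and y: "y \<in> Y"
  shows "\<ominus> y \<in> Y"
proof -
  have "(\<ominus> \<one>) \<otimes> y \<in> Y" using submodD(4)[OF Y subringE(5)[OF A subringE(3)[OF A]] y] .
  moreover have "y \<in> carrier R" using submodD(1)[OF Y] y by blast
  then have "(\<ominus> \<one>) \<otimes> y = \<ominus> y" by (simp add: l_minus)
  ultimately show ?thesis by simp
qed

lemma submod_diff:
  assumes "subring A R" "submod A Y" "x \<in> Y" "y \<in> Y"
  shows "x \<ominus> y \<in> Y"
  unfolding a_minus_def by (rule submodD(3)[OF assms(2,3) submod_neg[OF assms(1,2,4)]])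

lemma submod_Int: "submod A Y \<Longrightarrow> submod A K \<Longrightarrow> submod A (Y \<inter> K)"
  unfolding submod_def by auto

lemma ideal_submod:
  assumes P: "ideal P R" and A: "A \<subseteq> carrier R"
  shows "submod A P"
  unfolding submod_def
  using ideal_carrier[OF P] ideal_zero[OF P] ideal_add[OF P] ideal.I_l_closed[OF P] A by blast

lemma subring_submod: "subring A R \<Longrightarrow> submod A A"
  unfolding submod_def by (blast dest: subringE(1,2,6,7))

lemma submod_idealI:
  assumes X: "submod A X" and closed: "\<And>r x. r \<in> carrier R \<Longrightarrow> x \<in> X \<Longrightarrow> r \<otimes> x \<in> X"
  shows "ideal X R"
proof (rule idealI[OF ring_axioms])
  show "subgroup X (add_monoid R)"
  proof (rule add.subgroupI)
    show "X \<subseteq> carrier R" "X \<noteq> {}" using submodD(1,2)[OF X] by auto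
  next
    fix x assume x: "x \<in> X"
    then have "x \<in> carrier R" using submodD(1)[OF X] by blast
    then have "(\<ominus> \<one>) \<otimes> x = \<ominus> x" by (simp add: l_minus)
    then show "\<ominus> x \<in> X" using closed[OF a_inv_closed[OF one_closed] x] by simp
  next
    fix x y assume "x \<in> X" "y \<in> X"
    then show "x \<oplus> y \<in> X" using submodD(3)[OF X] by blast
  qed
next
  fix a x assume a: "a \<in> X" and x: "x \<in> carrier R"
  show "x \<otimes> a \<in> X" using closed[OF x a] .
  moreover have "a \<in> carrier R" using submodD(1)[OF X] a by blast
  then have "a \<otimes> x = x \<otimes> a" using m_comm x by blast
  ultimately show "a \<otimes> x \<in> X" by simp
qed

lemma ideal_subring_iff_submod:
  assumes A: "subring A R"
  shows "ideal J (R\<lparr>carrier := A\<rparr>) \<longleftrightarrow> J \<subseteq> A \<and> submod A J"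
proof
  assume J: "ideal J (R\<lparr>carrier := A\<rparr>)"
  interpret J: ideal J "R\<lparr>carrier := A\<rparr>" by (rule J)
  have "J \<subseteq> A" using J.a_subset by simp
  moreover have "\<zero> \<in> J" "\<And>x y. x \<in> J \<Longrightarrow> y \<in> J \<Longrightarrow> x \<oplus> y \<in> J"
    using additive_subgroup.zero_closed[OF J.is_additive_subgroup]
      additive_subgroup.a_closed[OF J.is_additive_subgroup] by simp_all
  moreover have "\<And>a x. a \<in> A \<Longrightarrow> x \<in> J \<Longrightarrow> a \<otimes> x \<in> J" using J.I_l_closed by simp
  moreover have "J \<subseteq> carrier R" using \<open>J \<subseteq> A\<close> subringE(1)[OF A] by blast
  ultimately show "J \<subseteq> A \<and> submod A J" unfolding submod_def by blast
next
  assume J: "J \<subseteq> A \<and> submod A J"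
  interpret S: ring "R\<lparr>carrier := A\<rparr>" using subring_is_ring[OF A] .
  have A_carr: "A \<subseteq> carrier R" using subringE(1)[OF A] .
  show "ideal J (R\<lparr>carrier := A\<rparr>)"
  proof (rule idealI[OF S.ring_axioms])
    show "subgroup J (add_monoid (R\<lparr>carrier := A\<rparr>))"
    proof (rule S.add.subgroupI)
      show "J \<subseteq> carrier (R\<lparr>carrier := A\<rparr>)" "J \<noteq> {}" using J submodD(2)[of A J] by auto
    next
      fix a b assume "a \<in> J" "b \<in> J"
      then show "a \<oplus>\<^bsub>R\<lparr>carrier := A\<rparr>\<^esub> b \<in> J" using submodD(3)[of A J] J by simp
    next
      fix a assume a: "a \<in> J"
      have aA: "a \<in> A" using a J by auto
      have "\<ominus>\<^bsub>R\<lparr>carrier := A\<rparr>\<^esub> a = (\<ominus>\<^bsub>R\<lparr>carrier := A\<rparr>\<^esub> \<one>) \<otimes> a"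
        using S.l_minus[OF S.one_closed, of a] S.l_one[of a] aA by simp
      moreover have "\<ominus>\<^bsub>R\<lparr>carrier := A\<rparr>\<^esub> \<one> \<in> A" using S.a_inv_closed[OF S.one_closed] by simp
      ultimately show "\<ominus>\<^bsub>R\<lparr>carrier := A\<rparr>\<^esub> a \<in> J" using submodD(4)[of A J] J a by simp
    qed
  next
    fix a x assume a: "a \<in> J" and x: "x \<in> carrier (R\<lparr>carrier := A\<rparr>)"
    have xA: "x \<in> A" using x by simp
    have "x \<otimes> a \<in> J" using submodD(4)[of A J] J a xA by blast
    moreover have "a \<otimes> x = x \<otimes> a" using m_comm a xA J A_carr by blast
    ultimately show "x \<otimes>\<^bsub>R\<lparr>carrier := A\<rparr>\<^esub> a \<in> J" "a \<otimes>\<^bsub>R\<lparr>carrier := A\<rparr>\<^esub> x \<in> J" by simp_all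
  qed
qed

lemma submod_colon:
  assumes p: "submod A p" and A: "A \<subseteq> carrier R" and s: "s \<in> carrier R"
  shows "submod A {r \<in> carrier R. s \<otimes> r \<in> p}"
  unfolding submod_def
proof (intro conjI ballI)
  show "\<zero> \<in> {r \<in> carrier R. s \<otimes> r \<in> p}" using submodD(2)[OF p] s by simp
next
  fix x y assume "x \<in> {r \<in> carrier R. s \<otimes> r \<in> p}" "y \<in> {r \<in> carrier R. s \<otimes> r \<in> p}"
  moreover have "s \<otimes> (x \<oplus> y) = s \<otimes> x \<oplus> s \<otimes> y" if "x \<in> carrier R" "y \<in> carrier R"
    using that s by (simp add: r_distr)
  ultimately show "x \<oplus> y \<in> {r \<in> carrier R. s \<otimes> r \<in> p}" using submodD(3)[OF p] by auto
next
  fix a y assume a: "a \<in> A" and y: "y \<in> {r \<in> carrier R. s \<otimes> r \<in> p}"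
  have "a \<in> carrier R" using a A by blast
  moreover have "s \<otimes> (a \<otimes> y) = a \<otimes> (s \<otimes> y)" using y \<open>a \<in> carrier R\<close> s by (simp add: m_lcomm)
  ultimately show "a \<otimes> y \<in> {r \<in> carrier R. s \<otimes> r \<in> p}" using submodD(4)[OF p a] y by auto
qed auto

lemma set_add_iff: "z \<in> Y <+> K \<longleftrightarrow> (\<exists>y\<in>Y. \<exists>k\<in>K. z = y \<oplus> k)"
  unfolding set_add_def' by blast

lemma set_addE:
  assumes "z \<in> Y <+>\<^bsub>R\<^esub> K"
  obtains y k where "y \<in> Y" "k \<in> K" "z = y \<oplus> k"
  using assms unfolding set_add_iff by blast

lemma submod_set_add:
  assumes Y: "submod A Y" and K: "submod A K" and A: "A \<subseteq> carrier R"
  shows "submod A (Y <+> K)"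
  unfolding submod_def
proof (intro conjI ballI)
  show "Y <+> K \<subseteq> carrier R"
  proof
    fix z :: 'a assume "z \<in> Y <+> K"
    then obtain y k where "y \<in> Y" "k \<in> K" "z = y \<oplus> k" by (rule set_addE)
    then show "z \<in> carrier R" using submodD(1)[OF Y] submodD(1)[OF K] by auto
  qed
  have "\<zero> \<oplus> \<zero> \<in> Y <+> K" using submodD(2)[OF Y] submodD(2)[OF K] set_add_iff by blast
  then show "\<zero> \<in> Y <+> K" by simp
next
  fix x z :: 'a assume x: "x \<in> Y <+> K" and z: "z \<in> Y <+> K"
  obtain y1 k1 where e1: "y1 \<in> Y" "k1 \<in> K" "x = y1 \<oplus> k1" using x by (rule set_addE)
  obtain y2 k2 where e2: "y2 \<in> Y" "k2 \<in> K" "z = y2 \<oplus> k2" using z by (rule set_addE)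
  have "y1 \<in> carrier R" "y2 \<in> carrier R" "k1 \<in> carrier R" "k2 \<in> carrier R"
    using e1 e2 submodD(1)[OF Y] submodD(1)[OF K] by auto
  then have "x \<oplus> z = (y1 \<oplus> y2) \<oplus> (k1 \<oplus> k2)" unfolding e1(3) e2(3) by algebra
  moreover have "y1 \<oplus> y2 \<in> Y" "k1 \<oplus> k2 \<in> K"
    using submodD(3)[OF Y e1(1) e2(1)] submodD(3)[OF K e1(2) e2(2)] .
  ultimately show "x \<oplus> z \<in> Y <+> K" unfolding set_add_iff by blast
next
  fix a x :: 'a assume a: "a \<in> A" and x: "x \<in> Y <+> K"
  obtain y k where e: "y \<in> Y" "k \<in> K" "x = y \<oplus> k" using x by (rule set_addE)
  have "y \<in> carrier R" "k \<in> carrier R" "a \<in> carrier R"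
    using e a A submodD(1)[OF Y] submodD(1)[OF K] by auto
  then have "a \<otimes> x = a \<otimes> y \<oplus> a \<otimes> k" unfolding e(3) by (simp add: r_distr)
  moreover have "a \<otimes> y \<in> Y" "a \<otimes> k \<in> K" using submodD(4)[OF Y a e(1)] submodD(4)[OF K a e(2)] .
  ultimately show "a \<otimes> x \<in> Y <+> K" unfolding set_add_iff by blast
qed

lemma set_add_upper_left:
  assumes "submod A K" "Y \<subseteq> carrier R"
  shows "Y \<subseteq> Y <+> K"
proof
  fix y assume y: "y \<in> Y"
  then have "y \<oplus> \<zero> \<in> Y <+> K" unfolding set_add_iff using submodD(2)[OF assms(1)] by blast
  moreover have "y \<in> carrier R" using y assms(2) by blast
  ultimately show "y \<in> Y <+> K" by simp
qed

lemma set_add_upper_right: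
  assumes "submod A Y" "K \<subseteq> carrier R"
  shows "K \<subseteq> Y <+> K"
proof
  fix k assume k: "k \<in> K"
  then have "\<zero> \<oplus> k \<in> Y <+> K" unfolding set_add_iff using submodD(2)[OF assms(1)] by blast
  moreover have "k \<in> carrier R" using k assms(2) by blast
  ultimately show "k \<in> Y <+> K" by simp
qed

lemma set_add_mono: "Y \<subseteq> Y' \<Longrightarrow> K \<subseteq> K' \<Longrightarrow> Y <+>\<^bsub>R\<^esub> K \<subseteq> Y' <+>\<^bsub>R\<^esub> K'"
  unfolding subset_iff set_add_iff by blast

lemma set_add_least:
  assumes X: "submod A X" and "Y \<subseteq> X" "K \<subseteq> X"
  shows "Y <+>\<^bsub>R\<^esub> K \<subseteq> X"
proof
  fix z :: 'a assume "z \<in> Y <+> K"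
  then obtain y k where "y \<in> Y" "k \<in> K" "z = y \<oplus> k" by (rule set_addE)
  then show "z \<in> X" using submodD(3)[OF X] assms(2,3) by blast
qed

inductive_set span :: "'a set \<Rightarrow> 'a set \<Rightarrow> 'a set" for K S where
  span_zero: "\<zero> \<in> span K S"
| span_smult: "k \<in> K \<Longrightarrow> s \<in> S \<Longrightarrow> k \<otimes> s \<in> span K S"
| span_add: "x \<in> span K S \<Longrightarrow> y \<in> span K S \<Longrightarrow> x \<oplus> y \<in> span K S"

lemma span_carrier:
  assumes "K \<subseteq> carrier R" "S \<subseteq> carrier R"
  shows "span K S \<subseteq> carrier R"
proof
  fix x assume "x \<in> span K S"
  then show "x \<in> carrier R"
  proof (induction rule: span.induct)
    case (span_smult k s)
    then show ?case using assms m_closed by blast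
  qed simp_all
qed

lemma span_mono: "S \<subseteq> S' \<Longrightarrow> span K S \<subseteq> span K S'"
proof
  fix x assume "S \<subseteq> S'" "x \<in> span K S"
  then show "x \<in> span K S'"
    by (induction rule: span.induct[OF \<open>x \<in> span K S\<close>]) (auto intro: span.intros)
qed

lemma span_empty: "span K {} = {\<zero>}"
proof (intro equalityI subsetI)
  fix x assume "x \<in> span K {}"
  then show "x \<in> {\<zero>}" by (induction rule: span.induct) auto
qed (auto intro: span_zero)

lemma span_closed_left:
  assumes K: "K \<subseteq> carrier R" "\<And>r k. r \<in> B \<Longrightarrow> k \<in> K \<Longrightarrow> r \<otimes> k \<in> K"
    and S: "S \<subseteq> carrier R" and r: "r \<in> B" "r \<in> carrier R" and x: "x \<in> span K S"
  shows "r \<otimes> x \<in> span K S"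
  using x
proof (induction rule: span.induct)
  case span_zero
  then show ?case using r(2) by (simp add: span.span_zero)
next
  case (span_smult k s)
  then have "k \<in> carrier R" "s \<in> carrier R" using K(1) S by blast+
  then have "r \<otimes> (k \<otimes> s) = (r \<otimes> k) \<otimes> s" using r(2) by (simp add: m_assoc)
  then show ?case using span.span_smult[OF K(2)[OF r(1) span_smult(1)] span_smult(2)] by simp
next
  case (span_add x y)
  then have "x \<in> carrier R" "y \<in> carrier R" using span_carrier[OF K(1) S] by blast+
  then have "r \<otimes> (x \<oplus> y) = r \<otimes> x \<oplus> r \<otimes> y" using r(2) by (simp add: r_distr)
  then show ?case using span.span_add[OF span_add(3,4)] by simp
qed

lemma span_submod:
  assumes "K \<subseteq> carrier R" "\<And>a k. a \<in> A \<Longrightarrow> k \<in> K \<Longrightarrow> a \<otimes> k \<in> K"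
    and "S \<subseteq> carrier R" and "A \<subseteq> carrier R"
  shows "submod A (span K S)"
  unfolding submod_def using span_carrier[OF assms(1,3)] span_closed_left[OF assms(1,2,3)] assms(4)
  by (auto intro: span.intros)

lemma span_insert:
  assumes A: "subring A R" and x: "x \<in> carrier R" and F: "F \<subseteq> carrier R"
    and z: "z \<in> span A (insert x F)"
  shows "\<exists>s\<in>span A F. \<exists>a\<in>A. z = s \<oplus> a \<otimes> x"
  using z
proof (induction rule: span.induct)
  case span_zero
  show ?case using span.span_zero subringE(2)[OF A] x by force
next
  case (span_smult k s)
  have kc: "k \<in> carrier R" using span_smult(1) subringE(1)[OF A] by blast
  show ?case
  proof (cases "s = x")
    case True
    then show ?thesis using span.span_zero span_smult(1) x kc by force
  next
    case False
    then have "k \<otimes> s \<in> span A F" using span.span_smult span_smult by auto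
    moreover have "k \<otimes> s = k \<otimes> s \<oplus> \<zero> \<otimes> x" using x kc False span_smult(2) F by auto
    ultimately show ?thesis using subringE(2)[OF A] by blast
  qed
next
  case (span_add y1 y2)
  then obtain s1 a1 s2 a2 where e: "s1 \<in> span A F" "a1 \<in> A" "y1 = s1 \<oplus> a1 \<otimes> x"
     "s2 \<in> span A F" "a2 \<in> A" "y2 = s2 \<oplus> a2 \<otimes> x" by auto
  have "s1 \<in> carrier R" "s2 \<in> carrier R" "a1 \<in> carrier R" "a2 \<in> carrier R"
    using e span_carrier[OF subringE(1)[OF A] F] subringE(1)[OF A] by auto
  then have "y1 \<oplus> y2 = (s1 \<oplus> s2) \<oplus> (a1 \<oplus> a2) \<otimes> x" using e(3,6) x by algebra
  then show ?case using span.span_add[OF e(1) e(4)] subringE(7)[OF A e(2) e(5)] by blast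
qed

lemma set_add_span_insert:
  assumes A: "subring A R" and W: "W \<subseteq> carrier R" and x: "x \<in> carrier R" and F: "F \<subseteq> carrier R"
    and z: "z \<in> W <+>\<^bsub>R\<^esub> span A (insert x F)"
  shows "\<exists>x'\<in>W <+>\<^bsub>R\<^esub> span A F. \<exists>a\<in>A. z = x' \<oplus> a \<otimes> x"
proof -
  obtain w s where ws: "w \<in> W" "s \<in> span A (insert x F)" "z = w \<oplus> s"
    using z by (rule set_addE)
  obtain s' a where sa: "s' \<in> span A F" "a \<in> A" "s = s' \<oplus> a \<otimes> x"
    using span_insert[OF A x F ws(2)] by blast
  have "w \<in> carrier R" "s' \<in> carrier R" "a \<in> carrier R"
    using ws sa W span_carrier[OF subringE(1)[OF A] F] subringE(1)[OF A] by blast+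
  then have "z = (w \<oplus> s') \<oplus> a \<otimes> x" using ws(3) sa(3) x by algebra
  moreover have "w \<oplus> s' \<in> W <+>\<^bsub>R\<^esub> span A F" unfolding set_add_iff using ws(1) sa(1) by blast
  ultimately show ?thesis using sa(2) by blast
qed

text \<open>Modular law: \<open>Y \<subseteq> Y'\<close> with \<open>Y \<inter> K = Y' \<inter> K\<close> and \<open>Y + K = Y' + K\<close> forces \<open>Y = Y'\<close>.\<close>
lemma submod_chain_stabilises:
  assumes A: "subring A R" and ne: "C \<noteq> {}" and ch: "chain\<^sub>\<subseteq> C"
    and sub: "\<And>Y. Y \<in> C \<Longrightarrow> submod A Y" and K: "submod A K"
    and Int_max: "\<Union>((\<lambda>Y. Y \<inter> K) ` C) \<in> (\<lambda>Y. Y \<inter> K) ` C"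
    and sum_max: "\<Union>((\<lambda>Y. Y <+>\<^bsub>R\<^esub> K) ` C) \<in> (\<lambda>Y. Y <+>\<^bsub>R\<^esub> K) ` C"
  shows "\<Union>C \<in> C"
proof -
  obtain Y0 where Y0: "Y0 \<in> C" "Y0 \<inter> K = \<Union>((\<lambda>Y. Y \<inter> K) ` C)" using Int_max by auto
  obtain Y1 where Y1: "Y1 \<in> C" "Y1 <+> K = \<Union>((\<lambda>Y. Y <+>\<^bsub>R\<^esub> K) ` C)" using sum_max by auto
  have "Y0 \<subseteq> Y1 \<or> Y1 \<subseteq> Y0" using ch Y0(1) Y1(1) unfolding chain_subset_def by blast
  then obtain Y2 where Y2: "Y2 \<in> C" "Y0 \<subseteq> Y2" "Y1 \<subseteq> Y2" using Y0(1) Y1(1) by blast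
  have "Y \<subseteq> Y2" if Y: "Y \<in> C" for Y
  proof (cases "Y \<subseteq> Y2")
    case False
    then have Y2Y: "Y2 \<subseteq> Y" using ch Y Y2(1) unfolding chain_subset_def by blast
    show ?thesis
    proof
      fix y assume y: "y \<in> Y"
      have "y \<in> Y <+> K" using set_add_upper_left[OF K submodD(1)[OF sub[OF Y]]] y by blast
      also have "\<dots> \<subseteq> Y1 <+> K" using Y1(2) Y by blast
      also have "\<dots> \<subseteq> Y2 <+> K" using set_add_mono[OF Y2(3) order_refl] .
      finally obtain y2 k where yk: "y2 \<in> Y2" "k \<in> K" "y = y2 \<oplus> k" by (rule set_addE)
      have "y2 \<in> carrier R" "k \<in> carrier R" using yk submodD(1)[OF sub[OF Y2(1)]] submodD(1)[OF K] by auto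
      then have "k = y \<ominus> y2" unfolding yk(3) by algebra
      then have "k \<in> Y \<inter> K" using submod_diff[OF A sub[OF Y] y] Y2Y yk(1,2) by auto
      then have "k \<in> Y2" using Y0(2) Y Y2(2) by blast
      then show "y \<in> Y2" unfolding yk(3) using submodD(3)[OF sub[OF Y2(1)] yk(1)] by blast
    qed
  qed
  then have "\<Union>C = Y2" using Y2(1) by auto
  then show ?thesis using Y2(1) by simp
qed

end

section \<open>Gluing maximal ideals with isomorphic residue fields\<close>

locale glued_maximal_ideals = noetherian_ring R + cring R for R (structure) +
  fixes Ms :: "'a set set" and M0 :: "'a set" and \<theta> :: "'a set \<Rightarrow> 'a set \<Rightarrow> 'a set"
  assumes finite_Ms: "finite Ms" and M0_in_Ms: "M0 \<in> Ms"
    and Ms_maximal: "\<And>N. N \<in> Ms \<Longrightarrow> maximalideal N R"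
    and \<theta>_iso: "\<And>N. N \<in> Ms \<Longrightarrow> \<theta> N \<in> ring_iso (R Quot N) (R Quot M0)"
begin

definition res :: "'a set \<Rightarrow> 'a \<Rightarrow> 'a set" where
  "res N a = \<theta> N (N +> a)"

definition L :: "'a set" where
  "L = {a \<in> carrier R. \<forall>N\<in>Ms. res N a = res M0 a}"

definition IM :: "'a set" where
  "IM = \<Inter>Ms"

lemma Ms_ideal: "N \<in> Ms \<Longrightarrow> ideal N R"
  using Ms_maximal maximalideal.axioms(1) by blast

lemma res_hom: "N \<in> Ms \<Longrightarrow> res N \<in> ring_hom R (R Quot M0)"
proof -
  assume N: "N \<in> Ms"
  have "\<theta> N \<circ> (\<lambda>a. N +> a) \<in> ring_hom R (R Quot M0)"
    using ring_hom_trans[OF ideal.rcos_ring_hom[OF Ms_ideal[OF N]]] \<theta>_iso[OF N]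
    unfolding ring_iso_def by blast
  then show ?thesis unfolding res_def[abs_def] comp_def .
qed

lemma res_hom_ring: "N \<in> Ms \<Longrightarrow> ring_hom_ring R (R Quot M0) (res N)"
  using res_hom ideal.quotient_is_ring[OF Ms_ideal[OF M0_in_Ms]] ring_hom_ringI2 ring_axioms by blast

lemma res_eq_iff:
  assumes N: "N \<in> Ms" and a: "a \<in> carrier R" and b: "b \<in> carrier R"
  shows "res N a = res N b \<longleftrightarrow> a \<ominus> b \<in> N"
proof -
  have "inj_on (\<theta> N) (carrier (R Quot N))"
    using \<theta>_iso[OF N] unfolding ring_iso_def bij_betw_def by auto
  moreover have "N +> a \<in> carrier (R Quot N)" "N +> b \<in> carrier (R Quot N)"
    using ring_hom_closed[OF ideal.rcos_ring_hom[OF Ms_ideal[OF N]]] a b by blast+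
  ultimately have "res N a = res N b \<longleftrightarrow> N +> a = N +> b"
    unfolding res_def by (metis inj_on_eq_iff)
  then show ?thesis using quotient_eq_iff_same_a_r_cos[OF Ms_ideal[OF N] a b] by simp
qed

lemma res_zero: "N \<in> Ms \<Longrightarrow> res N \<zero> = \<zero>\<^bsub>R Quot M0\<^esub>"
proof -
  assume N: "N \<in> Ms"
  interpret H: ring_hom_ring R "R Quot M0" "res N" using res_hom_ring[OF N] .
  show ?thesis by simp
qed

lemma res_zero_iff:
  assumes "N \<in> Ms" "a \<in> carrier R"
  shows "res N a = \<zero>\<^bsub>R Quot M0\<^esub> \<longleftrightarrow> a \<in> N"
  using res_eq_iff[OF assms zero_closed] res_zero[OF assms(1)] assms(2) by (simp add: a_minus_def)

lemma L_carrier: "L \<subseteq> carrier R"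
  unfolding L_def by blast

lemma res_L: "a \<in> L \<Longrightarrow> N \<in> Ms \<Longrightarrow> res N a = res M0 a"
  unfolding L_def by blast

lemma L_subring: "subring L R"
proof (rule subringI)
  show "L \<subseteq> carrier R" by (rule L_carrier)
  show "\<one> \<in> L" unfolding L_def using ring_hom_one[OF res_hom] M0_in_Ms by simp
next
  fix a assume a: "a \<in> L"
  then have "a \<in> carrier R" using L_carrier by blast
  moreover have "res N (\<ominus> a) = res M0 (\<ominus> a)" if N: "N \<in> Ms" for N
  proof -
    interpret H: ring_hom_ring R "R Quot M0" "res N" using res_hom_ring[OF N] .
    interpret H0: ring_hom_ring R "R Quot M0" "res M0" using res_hom_ring[OF M0_in_Ms] .
    show ?thesis using res_L[OF a N] \<open>a \<in> carrier R\<close> by simp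
  qed
  ultimately show "\<ominus> a \<in> L" unfolding L_def by simp
next
  fix a b assume a: "a \<in> L" and b: "b \<in> L"
  then have ab: "a \<in> carrier R" "b \<in> carrier R" using L_carrier by blast+
  have "res N (a \<otimes> b) = res M0 (a \<otimes> b)" if "N \<in> Ms" for N
    using ring_hom_mult[OF res_hom[OF that]] ring_hom_mult[OF res_hom[OF M0_in_Ms]]
      res_L[OF a that] res_L[OF b that] ab by simp
  then show "a \<otimes> b \<in> L" unfolding L_def using ab by simp
  have "res N (a \<oplus> b) = res M0 (a \<oplus> b)" if "N \<in> Ms" for N
    using ring_hom_add[OF res_hom[OF that]] ring_hom_add[OF res_hom[OF M0_in_Ms]]
      res_L[OF a that] res_L[OF b that] ab by simp
  then show "a \<oplus> b \<in> L" unfolding L_def using ab by simp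
qed

lemma IM_ideal: "ideal IM R"
  unfolding IM_def using i_Intersect Ms_ideal M0_in_Ms by blast

lemma IM_carrier: "IM \<subseteq> carrier R"
  using ideal_carrier[OF IM_ideal] .

lemma IM_subset: "N \<in> Ms \<Longrightarrow> IM \<subseteq> N"
  unfolding IM_def by blast

lemma IM_subset_L: "IM \<subseteq> L"
proof
  fix a assume a: "a \<in> IM"
  then have a_carr: "a \<in> carrier R" using IM_carrier by blast
  have "res N a = \<zero>\<^bsub>R Quot M0\<^esub>" if "N \<in> Ms" for N
    using res_zero_iff[OF that a_carr] IM_subset[OF that] a by blast
  then show "a \<in> L" unfolding L_def using a_carr M0_in_Ms by simp
qed

lemma Ms_Int_L: "N \<in> Ms \<Longrightarrow> N \<inter> L = IM"
proof (intro equalityI subsetI)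
  fix a assume N: "N \<in> Ms" and a: "a \<in> N \<inter> L"
  then have a_carr: "a \<in> carrier R" using L_carrier by blast
  show "a \<in> IM" unfolding IM_def
  proof
    fix N' assume N': "N' \<in> Ms"
    have "res N' a = res N a" using res_L[of a N'] res_L[of a N] a N N' by simp
    also have "\<dots> = \<zero>\<^bsub>R Quot M0\<^esub>" using res_zero_iff[OF N a_carr] a by blast
    finally show "a \<in> N'" using res_zero_iff[OF N' a_carr] by blast
  qed
next
  fix a assume "N \<in> Ms" "a \<in> IM"
  then show "a \<in> N \<inter> L" using IM_subset IM_subset_L by blast
qed

lemma one_notin_IM: "\<one> \<notin> IM"
  using IM_subset[OF M0_in_Ms] proper_ideal_one_notin Ms_ideal[OF M0_in_Ms]
    maximalideal.I_notcarr[OF Ms_maximal[OF M0_in_Ms]] by blast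

lemma res_surj:
  assumes N: "N \<in> Ms" and t: "t \<in> carrier (R Quot M0)"
  shows "\<exists>y\<in>carrier R. res N y = t"
proof -
  have "\<theta> N ` carrier (R Quot N) = carrier (R Quot M0)"
    using \<theta>_iso[OF N] unfolding ring_iso_def bij_betw_def by auto
  then obtain x where x: "x \<in> carrier (R Quot N)" "\<theta> N x = t" using t by (metis imageE)
  then obtain y where "y \<in> carrier R" "x = N +> y" unfolding FactRing_def A_RCOSETS_def' by auto
  then show ?thesis using x unfolding res_def by auto
qed

lemma L_approx:
  assumes r: "r \<in> carrier R" and N1: "N1 \<in> Ms"
  shows "\<exists>b\<in>L. b \<ominus> r \<in> N1"
proof -
  define t where "t = res N1 r"
  have "t \<in> carrier (R Quot M0)" unfolding t_def using ring_hom_closed[OF res_hom[OF N1] r] .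
  then have "\<forall>N\<in>Ms. \<exists>y\<in>carrier R. res N y = t" using res_surj by blast
  then obtain y where y: "\<And>N. N \<in> Ms \<Longrightarrow> y N \<in> carrier R \<and> res N (y N) = t"
    by metis
  obtain b where b: "b \<in> carrier R" "\<forall>N\<in>Ms. b \<ominus> y N \<in> N"
    using chinese_remainder_maximalideals[OF finite_Ms Ms_maximal, of y] y by auto
  have res_b: "res N b = t" if N: "N \<in> Ms" for N
    using res_eq_iff[OF N b(1), of "y N"] y[OF N] b(2) N by simp
  then have "b \<in> L" unfolding L_def using b(1) M0_in_Ms by simp
  moreover have "b \<ominus> r \<in> N1" using res_eq_iff[OF N1 b(1) r] res_b[OF N1] t_def by simp
  ultimately show ?thesis by blast
qed

text \<open>\<open>L/IM\<close> is a field: an inverse modulo every \<open>N\<close> exists by comaximality, and it lies in \<open>L\<close>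
  because inverses in \<open>R/M0\<close> are unique.\<close>
lemma L_inverse_mod_IM:
  assumes a: "a \<in> L" and a_notin: "a \<notin> IM"
  shows "\<exists>b\<in>L. a \<otimes> b \<ominus> \<one> \<in> IM"
proof -
  have a_carr: "a \<in> carrier R" using a L_carrier by blast
  have "\<exists>p\<in>PIdl a. \<exists>c\<in>N. \<one> = p \<oplus> c" if N: "N \<in> Ms" for N
  proof (rule maximalideal_comaximal[OF cgenideal_ideal[OF a_carr] Ms_maximal[OF N]])
    show "\<not> PIdl a \<subseteq> N" using Ms_Int_L[OF N] a a_notin cgenideal_self[OF a_carr] by blast
  qed
  then obtain p c where pc: "p \<in> PIdl a" "c \<in> carrier R" "\<forall>N\<in>Ms. c \<in> N" "\<one> = p \<oplus> c"
    using comaximal_with_Inter[OF cgenideal_ideal[OF a_carr] finite_Ms Ms_ideal] by blast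
  obtain b where b: "b \<in> carrier R" "p = b \<otimes> a" using pc(1) unfolding cgenideal_def by blast
  have "a \<otimes> b \<ominus> \<one> = a \<otimes> b \<ominus> (b \<otimes> a \<oplus> c)" using pc(4) b(2) by simp
  also have "\<dots> = \<ominus> c" using b(1) a_carr pc(2) by algebra
  finally have ab: "a \<otimes> b \<ominus> \<one> \<in> IM"
    using pc(3) ideal_neg[OF IM_ideal] unfolding IM_def by simp
  interpret Q: cring "R Quot M0" using ideal.quotient_is_cring[OF Ms_ideal[OF M0_in_Ms] is_cring] .
  have inverse: "res N a \<otimes>\<^bsub>R Quot M0\<^esub> res N b = \<one>\<^bsub>R Quot M0\<^esub>" if N: "N \<in> Ms" for N
  proof -
    have "res N (a \<otimes> b) = res N \<one>"
      using res_eq_iff[OF N m_closed[OF a_carr b(1)] one_closed] ab IM_subset[OF N] by blast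
    then show ?thesis using ring_hom_mult[OF res_hom[OF N] a_carr b(1)] ring_hom_one[OF res_hom[OF N]] by simp
  qed
  have "res N b = res M0 b" if N: "N \<in> Ms" for N
  proof -
    let ?u = "res M0 a"
    have carr: "?u \<in> carrier (R Quot M0)" "res N b \<in> carrier (R Quot M0)" "res M0 b \<in> carrier (R Quot M0)"
      using ring_hom_closed[OF res_hom] a_carr b(1) N M0_in_Ms by blast+
    have "res N b = (?u \<otimes>\<^bsub>R Quot M0\<^esub> res M0 b) \<otimes>\<^bsub>R Quot M0\<^esub> res N b"
      using inverse[OF M0_in_Ms] carr by simp
    also have "\<dots> = res M0 b \<otimes>\<^bsub>R Quot M0\<^esub> (?u \<otimes>\<^bsub>R Quot M0\<^esub> res N b)"
      using carr by (simp add: Q.m_assoc Q.m_lcomm)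
    also have "\<dots> = res M0 b" using inverse[OF N] res_L[OF a N] carr by simp
    finally show ?thesis .
  qed
  then have "b \<in> L" unfolding L_def using b(1) by blast
  then show ?thesis using ab by blast
qed

definition unit_at :: "'a set \<Rightarrow> 'a" where
  "unit_at N = (SOME e. e \<in> carrier R \<and> e \<ominus> \<one> \<in> N \<and> (\<forall>N'\<in>Ms - {N}. e \<in> N'))"

lemma unit_at:
  assumes N: "N \<in> Ms"
  shows "unit_at N \<in> carrier R" "unit_at N \<ominus> \<one> \<in> N" "\<And>N'. N' \<in> Ms \<Longrightarrow> N' \<noteq> N \<Longrightarrow> unit_at N \<in> N'"
proof -
  define y where "y N' = (if N' = N then \<one> else \<zero>)" for N'
  have "\<And>N'. N' \<in> Ms \<Longrightarrow> y N' \<in> carrier R" unfolding y_def by simp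
  then obtain e where e: "e \<in> carrier R" "\<forall>N'\<in>Ms. e \<ominus> y N' \<in> N'"
    using chinese_remainder_maximalideals[OF finite_Ms Ms_maximal] by blast
  have "e \<in> N'" if N': "N' \<in> Ms - {N}" for N'
  proof -
    have "e \<ominus> y N' \<in> N'" using e(2) N' by blast
    then show ?thesis using N' e(1) unfolding y_def by (simp add: a_minus_def)
  qed
  moreover have "e \<ominus> y N \<in> N" using e(2) N by blast
  then have "e \<ominus> \<one> \<in> N" by (simp add: y_def)
  ultimately have "e \<in> carrier R \<and> e \<ominus> \<one> \<in> N \<and> (\<forall>N'\<in>Ms - {N}. e \<in> N')"
    using e(1) by blast
  then have "unit_at N \<in> carrier R \<and> unit_at N \<ominus> \<one> \<in> N \<and> (\<forall>N'\<in>Ms - {N}. unit_at N \<in> N')"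
    unfolding unit_at_def by (rule someI)
  then show "unit_at N \<in> carrier R" "unit_at N \<ominus> \<one> \<in> N" "\<And>N'. N' \<in> Ms \<Longrightarrow> N' \<noteq> N \<Longrightarrow> unit_at N \<in> N'"
    by auto
qed

lemma unit_at_times_mod_IM:
  assumes r: "r \<in> carrier R" and N: "N \<in> Ms"
  shows "\<exists>b\<in>L. r \<otimes> unit_at N \<ominus> b \<otimes> unit_at N \<in> IM"
proof -
  obtain b where b: "b \<in> L" "b \<ominus> r \<in> N" using L_approx[OF r N] by blast
  have b_carr: "b \<in> carrier R" using b(1) L_carrier by blast
  have e: "unit_at N \<in> carrier R" using unit_at(1)[OF N] .
  have eq: "r \<otimes> unit_at N \<ominus> b \<otimes> unit_at N = (\<ominus> (b \<ominus> r)) \<otimes> unit_at N"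
    using r b_carr e by algebra
  have "r \<otimes> unit_at N \<ominus> b \<otimes> unit_at N \<in> N'" if N': "N' \<in> Ms" for N'
  proof (cases "N' = N")
    case True
    then show ?thesis unfolding eq
      using ideal.I_r_closed[OF Ms_ideal[OF N] ideal_neg[OF Ms_ideal[OF N] b(2)] e] by simp
  next
    case False
    have "\<ominus> (b \<ominus> r) \<in> carrier R" using b_carr r by simp
    then show ?thesis unfolding eq
      using ideal.I_l_closed[OF Ms_ideal[OF N'] unit_at(3)[OF N N' False]] by simp
  qed
  then show ?thesis using b(1) unfolding IM_def by blast
qed

lemma span_unit_at_mod:
  assumes S: "finite S" "S \<subseteq> Ms" and r: "r \<in> carrier R"
  shows "\<exists>s\<in>span L (unit_at ` Ms). \<forall>N\<in>S. r \<ominus> s \<in> N"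
  using S
proof (induction S rule: finite_induct)
  case empty
  then show ?case using span_zero by blast
next
  case (insert N S)
  have N: "N \<in> Ms" using insert by auto
  obtain s where s: "s \<in> span L (unit_at ` Ms)" "\<forall>N'\<in>S. r \<ominus> s \<in> N'" using insert by auto
  have s_carr: "s \<in> carrier R"
    using s(1) span_carrier[OF L_carrier] unit_at(1) by blast
  obtain c where c: "c \<in> L" "c \<ominus> (r \<ominus> s) \<in> N" using L_approx[OF minus_closed[OF r s_carr] N] by blast
  have c_carr: "c \<in> carrier R" using c(1) L_carrier by blast
  have e: "unit_at N \<in> carrier R" using unit_at(1)[OF N] .
  define s' where "s' = s \<oplus> c \<otimes> unit_at N"
  have "s' \<in> span L (unit_at ` Ms)" unfolding s'_def using span_add[OF s(1) span_smult[OF c(1)]] N by blast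
  moreover have "r \<ominus> s' \<in> N'" if N': "N' \<in> insert N S" for N'
  proof (cases "N' = N")
    case True
    have "r \<ominus> s' = \<ominus> (c \<ominus> (r \<ominus> s)) \<ominus> c \<otimes> (unit_at N \<ominus> \<one>)"
      unfolding s'_def using r s_carr c_carr e by algebra
    then show ?thesis unfolding True
      using ideal_diff[OF Ms_ideal[OF N] ideal_neg[OF Ms_ideal[OF N] c(2)]
          ideal.I_l_closed[OF Ms_ideal[OF N] unit_at(2)[OF N] c_carr]] by simp
  next
    case False
    then have N'_in: "N' \<in> S" "N' \<in> Ms" using N' insert.prems by auto
    have "r \<ominus> s' = (r \<ominus> s) \<ominus> c \<otimes> unit_at N"
      unfolding s'_def using r s_carr c_carr e by algebra
    then show ?thesis
      using ideal_diff[OF Ms_ideal[OF N'_in(2)] s(2)[rule_format, OF N'_in(1)]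
          ideal.I_l_closed[OF Ms_ideal[OF N'_in(2)] unit_at(3)[OF N N'_in(2) False] c_carr]] by simp
  qed
  ultimately show ?case by blast
qed

section \<open>The glued ring is Noetherian\<close>

lemma IM_submod: "submod L IM"
  using ideal_submod[OF IM_ideal] L_carrier by blast

lemma L_submod: "submod L L"
  using subring_submod[OF L_subring] .

text \<open>Between \<open>X'\<close> and \<open>X' + L x\<close> there is nothing else, since \<open>L/IM\<close> is a field.\<close>
lemma submod_between_cases:
  assumes X': "submod L X'" and Z: "submod L Z" and X'Z: "X' \<subseteq> Z" and ZX: "Z \<subseteq> X"
    and x: "x \<in> carrier R"
    and X_gen: "\<And>z. z \<in> X \<Longrightarrow> \<exists>x'\<in>X'. \<exists>a\<in>L. z = x' \<oplus> a \<otimes> x"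
    and IM_x: "\<And>i. i \<in> IM \<Longrightarrow> i \<otimes> x \<in> X'"
  shows "Z = X' \<or> X \<subseteq> Z"
proof (cases "Z \<subseteq> X'")
  case True
  then show ?thesis using X'Z by auto
next
  case False
  then obtain z where z: "z \<in> Z" "z \<notin> X'" by auto
  then obtain x' a where xa: "x' \<in> X'" "a \<in> L" "z = x' \<oplus> a \<otimes> x" using X_gen ZX by blast
  have carr: "x' \<in> carrier R" "a \<in> carrier R"
    using xa submodD(1)[OF X'] L_carrier by blast+
  have "a \<notin> IM"
  proof
    assume "a \<in> IM"
    then have "z \<in> X'" using xa IM_x submodD(3)[OF X'] by simp
    then show False using z by simp
  qed
  then obtain b where b: "b \<in> L" "a \<otimes> b \<ominus> \<one> \<in> IM" using L_inverse_mod_IM[OF xa(2)] by blast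
  have b_carr: "b \<in> carrier R" using b(1) L_carrier by blast
  have "x = b \<otimes> z \<ominus> b \<otimes> x' \<ominus> (a \<otimes> b \<ominus> \<one>) \<otimes> x"
    unfolding xa(3) using x carr b_carr by algebra
  moreover have "b \<otimes> z \<in> Z" "b \<otimes> x' \<in> Z" "(a \<otimes> b \<ominus> \<one>) \<otimes> x \<in> Z"
    using submodD(4)[OF Z b(1) z(1)] submodD(4)[OF X' b(1) xa(1)] IM_x[OF b(2)] X'Z by blast+
  ultimately have xZ: "x \<in> Z" using submod_diff[OF L_subring Z] by metis
  have "X \<subseteq> Z"
  proof
    fix w assume "w \<in> X"
    then obtain w' c where "w' \<in> X'" "c \<in> L" "w = w' \<oplus> c \<otimes> x" using X_gen by blast
    then show "w \<in> Z" using submodD(3)[OF Z] submodD(4)[OF Z] xZ X'Z by blast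
  qed
  then show ?thesis by blast
qed

lemma submod_chain_sum_two_valued:
  assumes X': "submod L X'" and X: "submod L X" "X' \<subseteq> X" and x: "x \<in> carrier R"
    and X_gen: "\<And>z. z \<in> X \<Longrightarrow> \<exists>x'\<in>X'. \<exists>a\<in>L. z = x' \<oplus> a \<otimes> x"
    and IM_x: "\<And>i. i \<in> IM \<Longrightarrow> i \<otimes> x \<in> X'"
    and C: "C \<noteq> {}" "chain\<^sub>\<subseteq> C" "\<And>Y. Y \<in> C \<Longrightarrow> submod L Y \<and> Y \<subseteq> X"
  shows "\<Union>((\<lambda>Y. Y <+>\<^bsub>R\<^esub> X') ` C) \<in> (\<lambda>Y. Y <+>\<^bsub>R\<^esub> X') ` C"
proof (rule chain_subset_Union_two)
  show "chain\<^sub>\<subseteq> ((\<lambda>Y. Y <+>\<^bsub>R\<^esub> X') ` C)"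
    by (rule chain_subset_image[OF C(2)]) (rule set_add_mono, auto)
  show "(\<lambda>Y. Y <+>\<^bsub>R\<^esub> X') ` C \<noteq> {}" using C(1) by blast
  show "(\<lambda>Y. Y <+>\<^bsub>R\<^esub> X') ` C \<subseteq> {X', X}"
  proof
    fix Z assume "Z \<in> (\<lambda>Y. Y <+>\<^bsub>R\<^esub> X') ` C"
    then obtain Y where Y: "Y \<in> C" "Z = Y <+>\<^bsub>R\<^esub> X'" by blast
    have YX: "submod L Y" "Y \<subseteq> X" using C(3)[OF Y(1)] by blast+
    have "submod L Z" using submod_set_add[OF YX(1) X' L_carrier] Y(2) by simp
    moreover have "X' \<subseteq> Z" using set_add_upper_right[OF YX(1) submodD(1)[OF X']] Y(2) by simp
    moreover have "Z \<subseteq> X" using set_add_least[OF X(1) YX(2) X(2)] Y(2) by simp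
    ultimately show "Z \<in> {X', X}"
      using submod_between_cases[OF X' _ _ _ x X_gen IM_x] by blast
  qed
qed

text \<open>\<open>(W + L F)/W\<close> is a finite-dimensional vector space over \<open>L/IM\<close>, hence of finite length.\<close>
lemma submod_chain_stabilises_finite:
  assumes F: "finite F" "F \<subseteq> carrier R" and W: "submod L W"
    and IM_ann: "\<And>i z. i \<in> IM \<Longrightarrow> z \<in> W <+>\<^bsub>R\<^esub> span L F \<Longrightarrow> i \<otimes> z \<in> W"
  shows "\<And>C. C \<noteq> {} \<Longrightarrow> chain\<^sub>\<subseteq> C \<Longrightarrow>
    (\<And>Y. Y \<in> C \<Longrightarrow> submod L Y \<and> W \<subseteq> Y \<and> Y \<subseteq> W <+>\<^bsub>R\<^esub> span L F) \<Longrightarrow> \<Union>C \<in> C"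
  using F IM_ann
proof (induction F rule: finite_induct)
  case empty
  have "W <+>\<^bsub>R\<^esub> span L {} \<subseteq> W"
    using set_add_least[OF W order_refl] submodD(2)[OF W] by (simp add: span_empty)
  then have "\<And>Y. Y \<in> C \<Longrightarrow> Y = W" using empty.prems(3) by blast
  then have "C = {W}" using empty.prems(1) by blast
  then show ?case by simp
next
  case (insert x F)
  have x: "x \<in> carrier R" and F: "F \<subseteq> carrier R" using insert.prems(4) by auto
  have span_submod_L: "submod L (span L G)" if "G \<subseteq> carrier R" for G
    using span_submod[OF L_carrier submodD(4)[OF L_submod] that L_carrier] .
  define X' where "X' = W <+>\<^bsub>R\<^esub> span L F"
  define X where "X = W <+>\<^bsub>R\<^esub> span L (insert x F)"
  have X': "submod L X'" unfolding X'_def using submod_set_add[OF W span_submod_L[OF F] L_carrier] .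
  have X: "submod L X" unfolding X_def
    using submod_set_add[OF W span_submod_L L_carrier] insert.prems(4) by blast
  have X'X: "X' \<subseteq> X" unfolding X'_def X_def by (rule set_add_mono[OF order_refl span_mono]) blast
  have WX': "W \<subseteq> X'" unfolding X'_def using set_add_upper_left[OF span_submod_L[OF F] submodD(1)[OF W]] .
  have "x \<in> span L (insert x F)" using span_smult[OF subringE(3)[OF L_subring], of x] x by simp
  then have "x \<in> X"
    unfolding X_def using set_add_upper_right[OF W] span_carrier[OF L_carrier] insert.prems(4) by blast
  then have IM_x: "\<And>i. i \<in> IM \<Longrightarrow> i \<otimes> x \<in> X'" using insert.prems(5) WX' unfolding X_def by blast
  have X_gen: "\<exists>x'\<in>X'. \<exists>a\<in>L. z = x' \<oplus> a \<otimes> x" if "z \<in> X" for z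
    using set_add_span_insert[OF L_subring submodD(1)[OF W] x F] that unfolding X_def X'_def by blast
  have Int_max: "\<Union>((\<lambda>Y. Y \<inter> X') ` C) \<in> (\<lambda>Y. Y \<inter> X') ` C"
  proof (rule insert.IH)
    show "(\<lambda>Y. Y \<inter> X') ` C \<noteq> {}" using insert.prems(1) by blast
    show "chain\<^sub>\<subseteq> ((\<lambda>Y. Y \<inter> X') ` C)" by (rule chain_subset_image[OF insert.prems(2)]) blast
    show "F \<subseteq> carrier R" by (rule F)
  next
    fix Y assume "Y \<in> (\<lambda>Y. Y \<inter> X') ` C"
    then obtain Y' where Y': "Y' \<in> C" "Y = Y' \<inter> X'" by blast
    then show "submod L Y \<and> W \<subseteq> Y \<and> Y \<subseteq> W <+>\<^bsub>R\<^esub> span L F"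
      using insert.prems(3)[OF Y'(1)] submod_Int[OF _ X'] WX' unfolding X'_def by blast
  next
    fix i z assume "i \<in> IM" "z \<in> W <+>\<^bsub>R\<^esub> span L F"
    then show "i \<otimes> z \<in> W" using insert.prems(5) X'X unfolding X'_def X_def by blast
  qed
  have sum_max: "\<Union>((\<lambda>Y. Y <+>\<^bsub>R\<^esub> X') ` C) \<in> (\<lambda>Y. Y <+>\<^bsub>R\<^esub> X') ` C"
    using submod_chain_sum_two_valued[OF X' X X'X x X_gen IM_x insert.prems(1,2)] insert.prems(3)
    unfolding X_def by blast
  show ?case
    by (rule submod_chain_stabilises[OF L_subring insert.prems(1,2) _ X' Int_max sum_max])
      (use insert.prems(3) in blast)
qed

text \<open>The products \<open>unit_at N \<otimes> g\<close> make \<open>gen_module G\<close> an ideal of \<open>R\<close>, because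
  \<open>R = L\<cdot>{unit_at N. N \<in> Ms} + IM\<close>.\<close>
definition unit_multiples :: "'a set \<Rightarrow> 'a set" where
  "unit_multiples G = {unit_at N \<otimes> g | N g. N \<in> Ms \<and> g \<in> G}"

definition gen_module :: "'a set \<Rightarrow> 'a set" where
  "gen_module G = span IM G <+>\<^bsub>R\<^esub> span L (unit_multiples G)"

lemma span_IM_closed:
  "G \<subseteq> carrier R \<Longrightarrow> r \<in> carrier R \<Longrightarrow> w \<in> span IM G \<Longrightarrow> r \<otimes> w \<in> span IM G"
  using span_closed_left[OF IM_carrier ideal.I_l_closed[OF IM_ideal]] by blast

lemma span_IM_submod: "G \<subseteq> carrier R \<Longrightarrow> submod L (span IM G)"
  using span_submod[OF IM_carrier ideal.I_l_closed[OF IM_ideal] _ L_carrier] L_carrier by blast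

lemma unit_multiples_carrier: "G \<subseteq> carrier R \<Longrightarrow> unit_multiples G \<subseteq> carrier R"
  unfolding unit_multiples_def using unit_at(1) by blast

lemma gen_module_submod:
  assumes G: "G \<subseteq> carrier R"
  shows "submod L (gen_module G)"
  unfolding gen_module_def
  using submod_set_add[OF span_IM_submod[OF G]
      span_submod[OF L_carrier submodD(4)[OF L_submod] unit_multiples_carrier[OF G] L_carrier] L_carrier] .

lemma gen_module_mult_unit_multiples:
  assumes G: "G \<subseteq> carrier R" and r: "r \<in> carrier R" and z: "z \<in> span L (unit_multiples G)"
  shows "r \<otimes> z \<in> gen_module G"
  using z
proof (induction rule: span.induct)
  case span_zero
  then show ?case using r submodD(2)[OF gen_module_submod[OF G]] by simp
next
  case (span_smult k s)
  obtain N g where Ng: "N \<in> Ms" "g \<in> G" "s = unit_at N \<otimes> g"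
    using span_smult(2) unfolding unit_multiples_def by blast
  have carr: "k \<in> carrier R" "unit_at N \<in> carrier R" "g \<in> carrier R"
    using span_smult(1) L_carrier unit_at(1)[OF Ng(1)] Ng(2) G by blast+
  obtain b where b: "b \<in> L" "(r \<otimes> k) \<otimes> unit_at N \<ominus> b \<otimes> unit_at N \<in> IM"
    using unit_at_times_mod_IM[OF m_closed[OF r carr(1)] Ng(1)] by blast
  have "b \<in> carrier R" using b(1) L_carrier by blast
  then have "r \<otimes> (k \<otimes> s) = ((r \<otimes> k) \<otimes> unit_at N \<ominus> b \<otimes> unit_at N) \<otimes> g \<oplus> b \<otimes> s"
    unfolding Ng(3) using r carr by algebra
  moreover have "((r \<otimes> k) \<otimes> unit_at N \<ominus> b \<otimes> unit_at N) \<otimes> g \<in> span IM G"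
    using span.span_smult[OF b(2) Ng(2)] .
  moreover have "b \<otimes> s \<in> span L (unit_multiples G)" using span.span_smult[OF b(1) span_smult(2)] .
  ultimately show ?case unfolding gen_module_def set_add_iff by blast
next
  case (span_add x y)
  have "x \<in> carrier R" "y \<in> carrier R"
    using span_add(1,2) span_carrier[OF L_carrier unit_multiples_carrier[OF G]] by blast+
  then have "r \<otimes> (x \<oplus> y) = r \<otimes> x \<oplus> r \<otimes> y" using r by (simp add: r_distr)
  then show ?case using submodD(3)[OF gen_module_submod[OF G] span_add(3,4)] by simp
qed

lemma gen_module_ideal:
  assumes G: "G \<subseteq> carrier R"
  shows "ideal (gen_module G) R"
proof -
  let ?xs = "unit_multiples G"
  have X: "submod L (gen_module G)" using gen_module_submod[OF G] .
  have xs: "?xs \<subseteq> carrier R" using unit_multiples_carrier[OF G] .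
  have closed: "r \<otimes> x \<in> gen_module G" if r: "r \<in> carrier R" and x: "x \<in> gen_module G" for r x
  proof -
    obtain w z where wz: "w \<in> span IM G" "z \<in> span L ?xs" "x = w \<oplus> z"
      using x unfolding gen_module_def by (rule set_addE)
    have "w \<in> carrier R" "z \<in> carrier R"
      using wz span_carrier[OF IM_carrier G] span_carrier[OF L_carrier xs] by blast+
    then have "r \<otimes> x = r \<otimes> w \<oplus> r \<otimes> z" unfolding wz(3) using r by (simp add: r_distr)
    moreover have "r \<otimes> w \<in> gen_module G"
      using span_IM_closed[OF G r wz(1)] set_add_upper_left[OF span_submod[OF L_carrier
          submodD(4)[OF L_submod] xs L_carrier] span_carrier[OF IM_carrier G]]
      unfolding gen_module_def by blast
    ultimately show ?thesis using submodD(3)[OF X _ gen_module_mult_unit_multiples[OF G r wz(2)]] by simp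
  qed
  show ?thesis by (rule submod_idealI[OF X closed])
qed

lemma genideal_subset_gen_module:
  assumes G: "G \<subseteq> carrier R"
  shows "Idl G \<subseteq> gen_module G"
proof (rule genideal_minimal[OF gen_module_ideal[OF G]], rule subsetI)
  let ?xs = "unit_multiples G"
  fix g assume g: "g \<in> G"
  then have g_carr: "g \<in> carrier R" using G by blast
  obtain s where s: "s \<in> span L (unit_at ` Ms)" "\<forall>N\<in>Ms. \<one> \<ominus> s \<in> N"
    using span_unit_at_mod[OF finite_Ms order_refl one_closed] by blast
  have s_carr: "s \<in> carrier R" using s(1) span_carrier[OF L_carrier] unit_at(1) by blast
  have "t \<otimes> g \<in> span L ?xs" if "t \<in> span L (unit_at ` Ms)" for t
    using that
  proof (induction rule: span.induct)
    case span_zero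
    then show ?case using g_carr span.span_zero by simp
  next
    case (span_smult k e)
    then obtain N where N: "N \<in> Ms" "e = unit_at N" by blast
    have "(k \<otimes> e) \<otimes> g = k \<otimes> (e \<otimes> g)"
      using span_smult(1) L_carrier unit_at(1)[OF N(1)] N(2) g_carr by (simp add: m_assoc subsetD)
    moreover have "e \<otimes> g \<in> ?xs" unfolding unit_multiples_def using N g by blast
    ultimately show ?case using span.span_smult[OF span_smult(1)] by metis
  next
    case (span_add x y)
    have "x \<in> carrier R" "y \<in> carrier R"
      using span_add(1,2) span_carrier[OF L_carrier] unit_at(1) by blast+
    then have "(x \<oplus> y) \<otimes> g = x \<otimes> g \<oplus> y \<otimes> g" using g_carr by (simp add: l_distr)
    then show ?case using span.span_add[OF span_add(3,4)] by simp
  qed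
  then have "s \<otimes> g \<in> span L ?xs" using s(1) by blast
  moreover have "(\<one> \<ominus> s) \<otimes> g \<in> span IM G"
    using span.span_smult[OF _ g] s(2) unfolding IM_def by blast
  moreover have "g = (\<one> \<ominus> s) \<otimes> g \<oplus> s \<otimes> g" using s_carr g_carr by algebra
  ultimately show "g \<in> gen_module G" unfolding gen_module_def set_add_iff by blast
qed

lemma IM_times_gen_module:
  assumes G: "G \<subseteq> carrier R" and i: "i \<in> IM" and z: "z \<in> gen_module G"
  shows "i \<otimes> z \<in> span IM G"
proof -
  let ?xs = "unit_multiples G"
  have i_carr: "i \<in> carrier R" using i IM_carrier by blast
  have "i \<otimes> t \<in> span IM G" if "t \<in> span L ?xs" for t
    using that
  proof (induction rule: span.induct)
    case span_zero
    then show ?case using i_carr span.span_zero by simp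
  next
    case (span_smult k s)
    obtain N g where Ng: "N \<in> Ms" "g \<in> G" "s = unit_at N \<otimes> g" using span_smult(2) unfolding unit_multiples_def by blast
    have carr: "k \<in> carrier R" "unit_at N \<in> carrier R" "g \<in> carrier R"
      using span_smult(1) L_carrier unit_at(1)[OF Ng(1)] Ng(2) G by blast+
    have "i \<otimes> (k \<otimes> s) = ((i \<otimes> k) \<otimes> unit_at N) \<otimes> g" unfolding Ng(3) using carr i_carr by (simp add: m_assoc)
    moreover have "(i \<otimes> k) \<otimes> unit_at N \<in> IM"
      using ideal.I_r_closed[OF IM_ideal ideal.I_r_closed[OF IM_ideal i carr(1)] carr(2)] .
    ultimately show ?case using span.span_smult[OF _ Ng(2)] by metis
  next
    case (span_add x y)
    have "x \<in> carrier R" "y \<in> carrier R"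
      using span_add(1,2) span_carrier[OF L_carrier unit_multiples_carrier[OF G]] by blast+
    then have "i \<otimes> (x \<oplus> y) = i \<otimes> x \<oplus> i \<otimes> y" using i_carr by (simp add: r_distr)
    then show ?case using submodD(3)[OF span_IM_submod[OF G] span_add(3,4)] by simp
  qed
  moreover obtain w t where wt: "w \<in> span IM G" "t \<in> span L ?xs" "z = w \<oplus> t"
    using z unfolding gen_module_def by (rule set_addE)
  moreover have "w \<in> carrier R" "t \<in> carrier R"
    using wt span_carrier[OF IM_carrier G] span_carrier[OF L_carrier unit_multiples_carrier[OF G]] by blast+
  ultimately show ?thesis
    using span_IM_closed[OF G i_carr wt(1)] submodD(3)[OF span_IM_submod[OF G]] i_carr
    by (simp add: r_distr)
qed

lemma span_subset_submod:
  assumes "submod B Y" "K \<subseteq> B" "S \<subseteq> Y"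
  shows "span K S \<subseteq> Y"
proof
  fix x assume "x \<in> span K S"
  then show "x \<in> Y"
  proof (induction rule: span.induct)
    case span_zero
    then show ?case using submodD(2)[OF assms(1)] .
  next
    case (span_smult k s)
    then show ?case using submodD(4)[OF assms(1)] assms(2,3) by blast
  next
    case (span_add x y)
    then show ?case using submodD(3)[OF assms(1)] by blast
  qed
qed

lemma chain_Int_IM_finitely_generated:
  assumes C_ne: "C \<noteq> {}" and ch: "chain\<^sub>\<subseteq> C"
  shows "\<exists>J0\<in>C. \<exists>G. finite G \<and> G \<subseteq> J0 \<inter> IM \<and> (\<forall>J\<in>C. J \<inter> IM \<subseteq> Idl G)"
proof -
  have ideals: "ideal (Idl (J \<inter> IM)) R" for J using genideal_ideal IM_carrier by blast
  have chain: "subset.chain {I. ideal I R} ((\<lambda>J. Idl (J \<inter> IM)) ` C)"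
    unfolding subset_chain_iff
  proof
    show "(\<lambda>J. Idl (J \<inter> IM)) ` C \<subseteq> {I. ideal I R}" using ideals by blast
    show "chain\<^sub>\<subseteq> ((\<lambda>J. Idl (J \<inter> IM)) ` C)"
    proof (rule chain_subset_image[OF ch])
      fix X Y :: "'a set" assume "X \<subseteq> Y"
      then show "Idl (X \<inter> IM) \<subseteq> Idl (Y \<inter> IM)"
        using subset_Idl_subset[of "Y \<inter> IM" "X \<inter> IM"] IM_carrier by blast
    qed
  qed
  have "(\<lambda>J. Idl (J \<inter> IM)) ` C \<noteq> {}" using C_ne by blast
  from ideal_chain_is_trivial[OF this chain]
  obtain J0 where J0: "J0 \<in> C" "Idl (J0 \<inter> IM) = \<Union>((\<lambda>J. Idl (J \<inter> IM)) ` C)" by (elim imageE) simp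
  then have J0_max: "\<And>J. J \<in> C \<Longrightarrow> Idl (J \<inter> IM) \<subseteq> Idl (J0 \<inter> IM)" by blast
  obtain G where G: "finite G" "G \<subseteq> J0 \<inter> IM" "Idl (J0 \<inter> IM) = Idl G"
    using genideal_finite_generators[of "J0 \<inter> IM"] IM_carrier by blast
  have "J \<inter> IM \<subseteq> Idl G" if "J \<in> C" for J
    using genideal_self[of "J \<inter> IM"] IM_carrier J0_max[OF that] G(3) by blast
  then show ?thesis using J0(1) G(1,2) by blast
qed

lemma finite_unit_multiples: "finite G \<Longrightarrow> finite (unit_multiples G)"
proof -
  assume "finite G"
  moreover have "unit_multiples G = (\<lambda>p. unit_at (fst p) \<otimes> snd p) ` (Ms \<times> G)"
    unfolding unit_multiples_def by force
  ultimately show ?thesis using finite_Ms by simp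
qed

lemma chain_Int_IM_stabilises:
  assumes G: "finite G" "G \<subseteq> IM" and C: "C \<noteq> {}" "chain\<^sub>\<subseteq> C"
    and sub: "\<And>J. J \<in> C \<Longrightarrow> submod L J \<and> G \<subseteq> J \<and> J \<inter> IM \<subseteq> Idl G"
  shows "\<Union>((\<lambda>Y. Y \<inter> IM) ` C) \<in> (\<lambda>Y. Y \<inter> IM) ` C"
proof -
  have G_carr: "G \<subseteq> carrier R" using G(2) IM_carrier by blast
  show ?thesis
  proof (rule submod_chain_stabilises_finite[OF finite_unit_multiples[OF G(1)]
        unit_multiples_carrier[OF G_carr] span_IM_submod[OF G_carr]])
    show "\<And>i z. i \<in> IM \<Longrightarrow> z \<in> span IM G <+>\<^bsub>R\<^esub> span L (unit_multiples G) \<Longrightarrow> i \<otimes> z \<in> span IM G"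
      using IM_times_gen_module[OF G_carr] unfolding gen_module_def by blast
    show "(\<lambda>Y. Y \<inter> IM) ` C \<noteq> {}" using C(1) by blast
    show "chain\<^sub>\<subseteq> ((\<lambda>Y. Y \<inter> IM) ` C)" by (rule chain_subset_image[OF C(2)]) blast
  next
    fix Y assume "Y \<in> (\<lambda>Y. Y \<inter> IM) ` C"
    then obtain J where J: "J \<in> C" "Y = J \<inter> IM" by blast
    have "submod L Y" using submod_Int[OF _ IM_submod] sub[OF J(1)] J(2) by blast
    moreover have "span IM G \<subseteq> Y"
      using span_subset_submod[OF \<open>submod L Y\<close> IM_subset_L] G(2) sub[OF J(1)] J(2) by blast
    moreover have "Y \<subseteq> gen_module G"
      using sub[OF J(1)] genideal_subset_gen_module[OF G_carr] J(2) by blast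
    ultimately show "submod L Y \<and> span IM G \<subseteq> Y \<and> Y \<subseteq> span IM G <+>\<^bsub>R\<^esub> span L (unit_multiples G)"
      unfolding gen_module_def by blast
  qed
qed

lemma noetherian_L: "noetherian_ring (R\<lparr>carrier := L\<rparr>)"
proof (rule ring.trivial_ideal_chain_imp_noetherian[OF subring_is_ring[OF L_subring]])
  fix C assume C_ne: "C \<noteq> {}" and C_chain: "subset.chain {I. ideal I (R\<lparr>carrier := L\<rparr>)} C"
  have C_sub: "J \<subseteq> L \<and> submod L J" if "J \<in> C" for J
  proof -
    have "ideal J (R\<lparr>carrier := L\<rparr>)" using C_chain that unfolding subset_chain_iff by blast
    then show ?thesis using ideal_subring_iff_submod[OF L_subring] by blast
  qed
  have ch: "chain\<^sub>\<subseteq> C" using C_chain unfolding subset_chain_iff by blast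
  obtain J0 G where J0: "J0 \<in> C" and G: "finite G" "G \<subseteq> J0 \<inter> IM" "\<forall>J\<in>C. J \<inter> IM \<subseteq> Idl G"
    using chain_Int_IM_finitely_generated[OF C_ne ch] by blast
  define C1 where "C1 = {J \<in> C. J0 \<subseteq> J}"
  have C1_ne: "C1 \<noteq> {}" unfolding C1_def using J0 by blast
  have ch1: "chain\<^sub>\<subseteq> C1" using ch unfolding C1_def chain_subset_def by blast
  have C1_sub: "\<And>J. J \<in> C1 \<Longrightarrow> submod L J \<and> J \<subseteq> L" using C_sub unfolding C1_def by blast
  have "\<And>J. J \<in> C1 \<Longrightarrow> submod L J \<and> G \<subseteq> J \<and> J \<inter> IM \<subseteq> Idl G"
    using C_sub G(2,3) unfolding C1_def by blast
  then have Int_max: "\<Union>((\<lambda>Y. Y \<inter> IM) ` C1) \<in> (\<lambda>Y. Y \<inter> IM) ` C1"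
    using chain_Int_IM_stabilises[OF G(1) _ C1_ne ch1] G(2) by blast
  have "\<exists>x'\<in>IM. \<exists>a\<in>L. z = x' \<oplus> a \<otimes> \<one>" if "z \<in> L" for z
    using that L_carrier ideal_zero[OF IM_ideal] by (metis l_zero r_one subsetD)
  moreover have "\<And>i. i \<in> IM \<Longrightarrow> i \<otimes> \<one> \<in> IM" using IM_carrier by auto
  ultimately have sum_max: "\<Union>((\<lambda>Y. Y <+>\<^bsub>R\<^esub> IM) ` C1) \<in> (\<lambda>Y. Y <+>\<^bsub>R\<^esub> IM) ` C1"
    using submod_chain_sum_two_valued[OF IM_submod L_submod IM_subset_L one_closed _ _ C1_ne ch1 C1_sub]
    by blast
  have "\<Union>C1 \<in> C1"
    using submod_chain_stabilises[OF L_subring C1_ne ch1 _ IM_submod Int_max sum_max] C1_sub by blast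
  then show "\<Union>C \<in> C" using chain_subset_Union_tail[OF ch J0] unfolding C1_def by simp
qed

section \<open>Primes of the glued ring\<close>

lemma L_cring: "cring (R\<lparr>carrier := L\<rparr>)"
  using subcring_iff[OF L_carrier] subcringI'[OF L_subring] by simp

lemma contraction_prime:
  assumes P: "primeideal P R"
  shows "primeideal (P \<inter> L) (R\<lparr>carrier := L\<rparr>)"
proof (rule primeidealI[OF _ L_cring])
  have "ideal P R" using P primeideal.axioms(1) by blast
  then show "ideal (P \<inter> L) (R\<lparr>carrier := L\<rparr>)"
    using ideal_subring_iff_submod[OF L_subring] submod_Int[OF ideal_submod[OF _ L_carrier] L_submod] by blast
  have "\<one> \<notin> P" using primeideal.I_notcarr[OF P] proper_ideal_one_notin \<open>ideal P R\<close> by blast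
  then show "carrier (R\<lparr>carrier := L\<rparr>) \<noteq> P \<inter> L" using subringE(3)[OF L_subring] by auto
next
  fix a b assume "a \<in> carrier (R\<lparr>carrier := L\<rparr>)" "b \<in> carrier (R\<lparr>carrier := L\<rparr>)"
    "a \<otimes>\<^bsub>R\<lparr>carrier := L\<rparr>\<^esub> b \<in> P \<inter> L"
  then show "a \<in> P \<inter> L \<or> b \<in> P \<inter> L" using primeideal.I_prime[OF P] L_carrier by auto
qed

lemma prime_not_in_Ms_not_superset_IM:
  assumes Q: "primeideal Q R" and Q_notin: "Q \<notin> Ms"
  shows "\<not> IM \<subseteq> Q"
proof -
  have "\<not> N \<subseteq> Q" if N: "N \<in> Ms" for N
  proof
    assume "N \<subseteq> Q"
    then have "Q = N \<or> Q = carrier R"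
      using maximalideal.I_maximal[OF Ms_maximal[OF N] primeideal.axioms(1)[OF Q]]
        ideal_carrier[OF primeideal.axioms(1)[OF Q]] by blast
    then show False using Q_notin N primeideal.I_notcarr[OF Q] by blast
  qed
  then obtain c where "c \<in> carrier R" "c \<notin> Q" "\<forall>N\<in>Ms. c \<in> N"
    using product_avoiding_prime[OF Q finite_Ms Ms_ideal] by blast
  then show ?thesis unfolding IM_def by blast
qed

text \<open>Multiplying by an element of \<open>IM\<close> outside \<open>Q\<close> moves \<open>P\<close> into \<open>L\<close>.\<close>
lemma contraction_reflects_subset:
  assumes P: "primeideal P R" and Q: "primeideal Q R" and Q_notin: "Q \<notin> Ms"
    and sub: "P \<inter> L \<subseteq> Q \<inter> L"
  shows "P \<subseteq> Q"
proof
  fix r assume r: "r \<in> P"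
  obtain s where s: "s \<in> IM" "s \<notin> Q" using prime_not_in_Ms_not_superset_IM[OF Q Q_notin] by blast
  have r_carr: "r \<in> carrier R" using r ideal_carrier[OF primeideal.axioms(1)[OF P]] by blast
  have s_carr: "s \<in> carrier R" using s IM_carrier by blast
  have "s \<otimes> r \<in> L" using ideal.I_r_closed[OF IM_ideal s(1) r_carr] IM_subset_L by blast
  moreover have "s \<otimes> r \<in> P" using ideal.I_l_closed[OF primeideal.axioms(1)[OF P] r s_carr] .
  ultimately have "s \<otimes> r \<in> Q" using sub by blast
  then show "r \<in> Q" using primeideal.I_prime[OF Q s_carr r_carr] s(2) by blast
qed

lemma contraction_subset_IM:
  assumes P: "primeideal P R" and sub: "P \<inter> L \<subseteq> IM"
  shows "\<exists>N\<in>Ms. P \<subseteq> N"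
proof (rule ccontr)
  have P_ideal: "ideal P R" using P primeideal.axioms(1) by blast
  assume "\<not> (\<exists>N\<in>Ms. P \<subseteq> N)"
  then have "\<forall>N\<in>Ms. \<exists>p\<in>P. \<exists>c\<in>N. \<one> = p \<oplus> c"
    using maximalideal_comaximal[OF P_ideal Ms_maximal] by blast
  then obtain p c where pc: "p \<in> P" "c \<in> carrier R" "\<forall>N\<in>Ms. c \<in> N" "\<one> = p \<oplus> c"
    using comaximal_with_Inter[OF P_ideal finite_Ms Ms_ideal] by blast
  have c: "c \<in> IM" using pc(3) unfolding IM_def by blast
  have p_carr: "p \<in> carrier R" using pc(1) ideal_carrier[OF P_ideal] by blast
  have "\<one> \<ominus> c = (p \<oplus> c) \<ominus> c" by (simp only: pc(4)[symmetric])
  then have "p = \<one> \<ominus> c" using p_carr pc(2) by algebra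
  moreover have "\<ominus> c \<in> L" using subringE(5)[OF L_subring] IM_subset_L c by blast
  ultimately have "p \<in> L" using subringE(7)[OF L_subring subringE(3)[OF L_subring]] by (simp add: a_minus_def)
  then have "p \<in> IM" using sub pc(1) by blast
  then have "\<one> \<in> IM" using pc(4) ideal_add[OF IM_ideal _ c] by simp
  then show False using one_notin_IM by blast
qed

lemma contraction_subset_iff:
  assumes P: "primeideal P R" and Q: "primeideal Q R"
  shows "P \<inter> L \<subseteq> Q \<inter> L \<longleftrightarrow> P \<subseteq> Q \<or> (Q \<in> Ms \<and> (\<exists>N\<in>Ms. P \<subseteq> N))"
proof
  assume sub: "P \<inter> L \<subseteq> Q \<inter> L"
  show "P \<subseteq> Q \<or> (Q \<in> Ms \<and> (\<exists>N\<in>Ms. P \<subseteq> N))"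
  proof (cases "Q \<in> Ms")
    case True
    then show ?thesis using contraction_subset_IM[OF P] sub Ms_Int_L by blast
  next
    case False
    then show ?thesis using contraction_reflects_subset[OF P Q _ sub] by blast
  qed
next
  assume "P \<subseteq> Q \<or> (Q \<in> Ms \<and> (\<exists>N\<in>Ms. P \<subseteq> N))"
  then show "P \<inter> L \<subseteq> Q \<inter> L" using Ms_Int_L by blast
qed

lemma prime_L_colon:
  assumes p: "primeideal p (R\<lparr>carrier := L\<rparr>)" and s: "s \<in> IM" "s \<notin> p"
  defines "P \<equiv> {r \<in> carrier R. s \<otimes> r \<in> p}"
  shows "primeideal P R" and "p = P \<inter> L"
proof -
  have p_ideal: "ideal p (R\<lparr>carrier := L\<rparr>)" using p primeideal.axioms(1) by blast
  have pL: "p \<subseteq> L" and p_submod: "submod L p" using ideal_subring_iff_submod[OF L_subring] p_ideal by blast+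
  have prime: "a \<in> p \<or> b \<in> p" if "a \<in> L" "b \<in> L" "a \<otimes> b \<in> p" for a b
    using primeideal.I_prime[OF p] that by simp
  have s_carr: "s \<in> carrier R" and sL: "s \<in> L" using s(1) IM_carrier IM_subset_L by blast+
  have sI: "s \<otimes> x \<in> L" if "x \<in> carrier R" for x
    using ideal.I_r_closed[OF IM_ideal s(1) that] IM_subset_L by blast
  have cancel: "x \<in> p" if "x \<in> L" "s \<otimes> x \<in> p" for x
    using prime[OF sL that] s(2) by blast
  have P_submod: "submod L P" unfolding P_def using submod_colon[OF p_submod L_carrier s_carr] .
  have closed: "r \<otimes> x \<in> P" if r: "r \<in> carrier R" and x: "x \<in> P" for r x
  proof -
    have x': "x \<in> carrier R" "s \<otimes> x \<in> p" using x unfolding P_def by auto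
    have "(s \<otimes> r) \<otimes> (s \<otimes> x) \<in> p" using submodD(4)[OF p_submod sI[OF r] x'(2)] .
    moreover have "(s \<otimes> r) \<otimes> (s \<otimes> x) = s \<otimes> (s \<otimes> (r \<otimes> x))" using s_carr r x' by algebra
    ultimately have "s \<otimes> (r \<otimes> x) \<in> p" using cancel[OF sI] r x' by auto
    then show ?thesis unfolding P_def using r x' by auto
  qed
  show "primeideal P R"
  proof (rule primeidealI[OF submod_idealI[OF P_submod closed] is_cring])
    have "\<one> \<notin> P" using s(2) s_carr unfolding P_def by simp
    then show "carrier R \<noteq> P" by blast
  next
    fix a b assume ab: "a \<in> carrier R" "b \<in> carrier R" "a \<otimes> b \<in> P"
    have "(s \<otimes> a) \<otimes> (s \<otimes> b) = s \<otimes> (s \<otimes> (a \<otimes> b))" using s_carr ab by algebra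
    moreover have "s \<otimes> (s \<otimes> (a \<otimes> b)) \<in> p" using submodD(4)[OF p_submod sL] ab(3) unfolding P_def by blast
    ultimately have "s \<otimes> a \<in> p \<or> s \<otimes> b \<in> p" using prime sI ab(1,2) by metis
    then show "a \<in> P \<or> b \<in> P" unfolding P_def using ab by auto
  qed
  show "p = P \<inter> L"
  proof
    show "P \<inter> L \<subseteq> p" unfolding P_def using cancel by blast
    show "p \<subseteq> P \<inter> L" unfolding P_def using submodD(4)[OF p_submod sL] pL L_carrier by blast
  qed
qed

lemma prime_L_contraction:
  assumes p: "primeideal p (R\<lparr>carrier := L\<rparr>)"
  shows "\<exists>P. primeideal P R \<and> p = P \<inter> L"
proof (cases "IM \<subseteq> p")
  case True
  have p_ideal: "ideal p (R\<lparr>carrier := L\<rparr>)" using p primeideal.axioms(1) by blast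
  have pL: "p \<subseteq> L" and p_submod: "submod L p" using ideal_subring_iff_submod[OF L_subring] p_ideal by blast+
  have one: "\<one> \<notin> p" using primeideal.I_notcarr[OF p] ideal.one_imp_carrier[OF p_ideal] by fastforce
  have "p \<subseteq> IM"
  proof
    fix a assume a: "a \<in> p"
    show "a \<in> IM"
    proof (rule ccontr)
      assume "a \<notin> IM"
      then obtain b where b: "b \<in> L" "a \<otimes> b \<ominus> \<one> \<in> IM" using L_inverse_mod_IM pL a by blast
      have carr: "a \<in> carrier R" "b \<in> carrier R" using a pL b(1) L_carrier by blast+
      have "a \<otimes> b \<in> p" using submodD(4)[OF p_submod b(1) a] m_comm[OF carr] by simp
      then have "a \<otimes> b \<ominus> (a \<otimes> b \<ominus> \<one>) \<in> p" using submod_diff[OF L_subring p_submod] b(2) True by blast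
      moreover have "a \<otimes> b \<ominus> (a \<otimes> b \<ominus> \<one>) = \<one>" using carr by algebra
      ultimately show False using one by simp
    qed
  qed
  then have "p = M0 \<inter> L" using True Ms_Int_L[OF M0_in_Ms] by blast
  then show ?thesis using maximalideal_prime[OF Ms_maximal[OF M0_in_Ms]] by blast
next
  case False
  then obtain s where s: "s \<in> IM" "s \<notin> p" by blast
  show ?thesis using prime_L_colon[OF p s] by blast
qed

lemma Spec_L: "Spec (R\<lparr>carrier := L\<rparr>) = (\<lambda>P. P \<inter> L) ` Spec R"
  unfolding Spec_def using contraction_prime prime_L_contraction by blast

end

section \<open>Splittings\<close>

lemma glued_maximal_ideals_exists:
  assumes R: "noetherian_ring R" "cring R" and Ms: "finite Ms" "M0 \<in> Ms"
    and Ms_max: "\<And>N. N \<in> Ms \<Longrightarrow> maximalideal N R"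
    and iso: "\<And>M N. maximalideal M R \<Longrightarrow> maximalideal N R \<Longrightarrow> R Quot M \<simeq> R Quot N"
  shows "\<exists>\<theta>. glued_maximal_ideals R Ms M0 \<theta>"
proof -
  have "\<forall>N\<in>Ms. \<exists>h. h \<in> ring_iso (R Quot N) (R Quot M0)"
    using iso Ms_max Ms(2) unfolding is_ring_iso_def by blast
  then obtain \<theta> where "\<And>N. N \<in> Ms \<Longrightarrow> \<theta> N \<in> ring_iso (R Quot N) (R Quot M0)" by metis
  then have "glued_maximal_ideals R Ms M0 \<theta>"
    using R Ms Ms_max by (intro glued_maximal_ideals.intro glued_maximal_ideals_axioms.intro) auto
  then show ?thesis by blast
qed

lemma (in noetherian_ring) maximal_node_maximalideal:
  assumes "cring R" and f: "bij_betw f U (Spec R)" "\<And>x y. x \<in> U \<Longrightarrow> y \<in> U \<Longrightarrow> leU x y \<longleftrightarrow> f x \<subseteq> f y"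
    and x: "is_maximal_node U leU x"
  shows "maximalideal (f x) R"
proof -
  have x_U: "x \<in> U" using x unfolding is_maximal_node_def by blast
  have prime: "primeideal (f x) R" using f(1) x_U unfolding bij_betw_def Spec_def by blast
  obtain K where K: "maximalideal K R" "f x \<subseteq> K"
    using exists_maximalideal_superset[OF primeideal.axioms(1)[OF prime]] primeideal.I_notcarr[OF prime] by blast
  have "K \<in> Spec R" using cring.maximalideal_prime[OF assms(1) K(1)] unfolding Spec_def by blast
  then obtain y where y: "y \<in> U" "K = f y" using f(1) unfolding bij_betw_def by blast
  then have "y = x" using x f(2)[OF x_U y(1)] K(2) unfolding is_maximal_node_def by blast
  then show ?thesis using K(1) y(2) by simp
qed

lemma splitting_le_iff:
  assumes split: "is_splitting V leV m U leU \<phi>" and x: "x \<in> U" and y: "y \<in> U"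
  shows "leV (\<phi> x) (\<phi> y) \<longleftrightarrow> leU x y \<or> (\<phi> y = m \<and> (\<exists>y'\<in>U. \<phi> y' = m \<and> leU x y'))"
proof -
  have into: "\<phi> ` U = V"
    and mono: "\<And>x y. x \<in> U \<Longrightarrow> y \<in> U \<Longrightarrow> leU x y \<Longrightarrow> leV (\<phi> x) (\<phi> y)"
    and fibre: "\<And>v. v \<in> V \<Longrightarrow> v \<noteq> m \<Longrightarrow> card {x \<in> U. \<phi> x = v} = 1"
    and lift: "\<And>x' v. x' \<in> U \<Longrightarrow> v \<in> V \<Longrightarrow> leV (\<phi> x') v \<Longrightarrow> \<exists>y'\<in>U. leU x' y' \<and> \<phi> y' = v"
    using split unfolding is_splitting_def by blast+
  show ?thesis
  proof
    assume le: "leV (\<phi> x) (\<phi> y)"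
    have y_V: "\<phi> y \<in> V" using into y by blast
    then obtain y' where y': "y' \<in> U" "leU x y'" "\<phi> y' = \<phi> y" using lift[OF x _ le] by blast
    show "leU x y \<or> (\<phi> y = m \<and> (\<exists>y'\<in>U. \<phi> y' = m \<and> leU x y'))"
    proof (cases "\<phi> y = m")
      case False
      obtain z where z: "{z' \<in> U. \<phi> z' = \<phi> y} = {z}" using fibre[OF y_V False] by (rule card_1_singletonE)
      have "y \<in> {z' \<in> U. \<phi> z' = \<phi> y}" "y' \<in> {z' \<in> U. \<phi> z' = \<phi> y}" using y y'(1,3) by simp_all
      then have "y' = y" unfolding z by simp
      then show ?thesis using y'(2) by blast
    qed (use y' in blast)
  next
    assume "leU x y \<or> (\<phi> y = m \<and> (\<exists>y'\<in>U. \<phi> y' = m \<and> leU x y'))"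
    then show "leV (\<phi> x) (\<phi> y)"
    proof
      assume "\<phi> y = m \<and> (\<exists>y'\<in>U. \<phi> y' = m \<and> leU x y')"
      then obtain y' where "y' \<in> U" "\<phi> y' = \<phi> y" "leU x y'" by blast
      then show ?thesis using mono[OF x] by metis
    qed (rule mono[OF x y])
  qed
qed

lemma poset_iso_of_common_domain:
  assumes \<phi>: "\<phi> ` U = V" and c: "c ` U = T"
    and le: "\<And>x y. x \<in> U \<Longrightarrow> y \<in> U \<Longrightarrow> leT (c x) (c y) \<longleftrightarrow> leV (\<phi> x) (\<phi> y)"
    and V: "is_poset V leV" and T: "is_poset T leT"
  shows "poset_iso T leT V leV"
proof -
  have refl_T: "\<And>t. t \<in> T \<Longrightarrow> leT t t"
    and antisym_T: "\<And>t s. t \<in> T \<Longrightarrow> s \<in> T \<Longrightarrow> leT t s \<Longrightarrow> leT s t \<Longrightarrow> t = s"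
    using T unfolding is_poset_def by blast+
  have refl_V: "\<And>v. v \<in> V \<Longrightarrow> leV v v"
    and antisym_V: "\<And>v w. v \<in> V \<Longrightarrow> w \<in> V \<Longrightarrow> leV v w \<Longrightarrow> leV w v \<Longrightarrow> v = w"
    using V unfolding is_poset_def by blast+
  define u where "u t = inv_into U c t" for t
  have u: "u t \<in> U" "c (u t) = t" if "t \<in> T" for t
    unfolding u_def using that c by (auto intro: inv_into_into f_inv_into_f)
  have le_u: "leT t s \<longleftrightarrow> leV (\<phi> (u t)) (\<phi> (u s))" if "t \<in> T" "s \<in> T" for t s
    using le[OF u(1)[OF that(1)] u(1)[OF that(2)]] u(2) that by simp
  have "inj_on (\<phi> \<circ> u) T"
  proof (rule inj_onI)
    fix t s assume ts: "t \<in> T" "s \<in> T" "(\<phi> \<circ> u) t = (\<phi> \<circ> u) s"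
    have "\<phi> (u t) \<in> V" using u(1)[OF ts(1)] \<phi> by blast
    then have "leT t s" "leT s t" using le_u[OF ts(1,2)] le_u[OF ts(2,1)] refl_V ts(3) by simp_all
    then show "t = s" using antisym_T ts(1,2) by blast
  qed
  moreover have "V \<subseteq> (\<phi> \<circ> u) ` T"
  proof
    fix v assume "v \<in> V"
    then obtain x where x: "x \<in> U" "v = \<phi> x" using \<phi> by blast
    then have cx: "c x \<in> T" using c by blast
    then have "leV (\<phi> (u (c x))) (\<phi> x)" "leV (\<phi> x) (\<phi> (u (c x)))"
      using le[OF u(1)[OF cx] x(1)] le[OF x(1) u(1)[OF cx]] u(2)[OF cx] refl_T[OF cx] by simp_all
    moreover have "\<phi> (u (c x)) \<in> V" using u(1)[OF cx] \<phi> by blast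
    ultimately have "\<phi> (u (c x)) = v" using antisym_V x \<phi> by blast
    then show "v \<in> (\<phi> \<circ> u) ` T" using cx by force
  qed
  moreover have "(\<phi> \<circ> u) ` T \<subseteq> V" using u(1) \<phi> by auto
  ultimately have "bij_betw (\<phi> \<circ> u) T V" unfolding bij_betw_def by blast
  then show ?thesis unfolding poset_iso_def using le_u by auto
qed

lemma splitting_fibre:
  assumes "is_splitting V leV m U leU \<phi>"
  shows "finite {x \<in> U. \<phi> x = m}" "{x \<in> U. \<phi> x = m} \<noteq> {}"
    and "\<And>x. x \<in> U \<Longrightarrow> \<phi> x = m \<Longrightarrow> is_maximal_node U leU x"
proof -
  have "\<exists>M. finite M \<and> M \<noteq> {} \<and> (\<forall>x\<in>M. is_maximal_node U leU x \<and> node_height U leU x > 0) \<and>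
      {x \<in> U. \<phi> x = m} = M"
    using assms unfolding is_splitting_def by (elim conjE)
  then obtain M where "finite M" "M \<noteq> {}" "\<forall>x\<in>M. is_maximal_node U leU x" "{x \<in> U. \<phi> x = m} = M"
    by (elim exE conjE) simp
  then show "finite {x \<in> U. \<phi> x = m}" "{x \<in> U. \<phi> x = m} \<noteq> {}"
    and "\<And>x. x \<in> U \<Longrightarrow> \<phi> x = m \<Longrightarrow> is_maximal_node U leU x" by auto
qed

lemma (in glued_maximal_ideals) Spec_L_iso_of_splitting:
  assumes split: "is_splitting V leV m U leU \<phi>" and V: "is_poset V leV"
    and f: "bij_betw f U (Spec R)" and f_le: "\<And>x y. x \<in> U \<Longrightarrow> y \<in> U \<Longrightarrow> leU x y \<longleftrightarrow> f x \<subseteq> f y"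
    and Ms_eq: "Ms = f ` {x \<in> U. \<phi> x = m}"
  shows "poset_iso (Spec (R\<lparr>carrier := L\<rparr>)) (\<subseteq>) V leV"
proof -
  have f_prime: "\<And>x. x \<in> U \<Longrightarrow> primeideal (f x) R" using f unfolding bij_betw_def Spec_def by blast
  have f_in: "\<And>x. x \<in> U \<Longrightarrow> f x \<in> Ms \<longleftrightarrow> \<phi> x = m"
    using f Ms_eq unfolding bij_betw_def inj_on_def by blast
  have "(\<lambda>x. f x \<inter> L) ` U = (\<lambda>P. P \<inter> L) ` (f ` U)" by (simp add: image_image)
  also have "\<dots> = Spec (R\<lparr>carrier := L\<rparr>)" using Spec_L f unfolding bij_betw_def by simp
  finally have "(\<lambda>x. f x \<inter> L) ` U = Spec (R\<lparr>carrier := L\<rparr>)" .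
  moreover have "f x \<inter> L \<subseteq> f y \<inter> L \<longleftrightarrow> leV (\<phi> x) (\<phi> y)" if x: "x \<in> U" and y: "y \<in> U" for x y
  proof -
    have "(\<exists>N\<in>Ms. f x \<subseteq> N) \<longleftrightarrow> (\<exists>y'\<in>U. \<phi> y' = m \<and> leU x y')"
      using f_le[OF x] Ms_eq by blast
    then show ?thesis
      using contraction_subset_iff[OF f_prime[OF x] f_prime[OF y]] splitting_le_iff[OF split x y]
        f_le[OF x y] f_in[OF y] by blast
  qed
  moreover have "\<phi> ` U = V" using split unfolding is_splitting_def by blast
  moreover have "is_poset (Spec (R\<lparr>carrier := L\<rparr>)) (\<subseteq>)" unfolding is_poset_def by blast
  ultimately show ?thesis using poset_iso_of_common_domain[OF _ _ _ V] by blast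
qed

theorem theorem6p1:
  fixes V :: "'v set" and leV :: "'v \<Rightarrow> 'v \<Rightarrow> bool" and m :: 'v
    and U :: "'u set" and leU :: "'u \<Rightarrow> 'u \<Rightarrow> bool" and \<phi> :: "'u \<Rightarrow> 'v"
    and R :: "('a, 'b) ring_scheme"
  assumes "is_poset V leV"
    and "is_maximal_node V leV m"
    and "node_height V leV m > 0"
    and "is_splitting V leV m U leU \<phi>"
    and "cring R" and "noetherian_ring R"
    and "poset_iso U leU (Spec R) (\<subseteq>)"
    and "\<And>M N. maximalideal M R \<Longrightarrow> maximalideal N R \<Longrightarrow> R Quot M \<simeq> R Quot N"
  shows "\<exists>L. subring L R \<and> noetherian_ring (R\<lparr>carrier := L\<rparr>) \<and>
             poset_iso (Spec (R\<lparr>carrier := L\<rparr>)) (\<subseteq>) V leV"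
proof -
  interpret noetherian_ring R by fact
  obtain f where f: "bij_betw f U (Spec R)"
    and f_le: "\<And>x y. x \<in> U \<Longrightarrow> y \<in> U \<Longrightarrow> leU x y \<longleftrightarrow> f x \<subseteq> f y"
    using assms(7) unfolding poset_iso_def by blast
  define M where "M = {x \<in> U. \<phi> x = m}"
  have M: "finite M" "M \<noteq> {}" "\<And>x. x \<in> M \<Longrightarrow> is_maximal_node U leU x"
    using splitting_fibre[OF assms(4)] unfolding M_def by blast+
  obtain M0 where "M0 \<in> f ` M" using M(2) by blast
  then obtain \<theta> where "glued_maximal_ideals R (f ` M) M0 \<theta>"
    using glued_maximal_ideals_exists[OF assms(6,5) finite_imageI[OF M(1)]] assms(8)
      maximal_node_maximalideal[OF assms(5) f f_le M(3)] by blast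
  then interpret G: glued_maximal_ideals R "f ` M" M0 \<theta> .
  show ?thesis
    using G.L_subring G.noetherian_L G.Spec_L_iso_of_splitting[OF assms(4,1) f f_le arg_cong[where f = "image f", OF M_def]] by blast
qed

end
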